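(* Let $(\mathcal N,g)$ be a complete, connected, smooth Riemannian manifold isometrically embedded in $\mathbb R^N$, let $\Omega\subset\mathbb R^m$ be an open, bounded, smooth domain, $\alpha\in]0,1[$, $\varepsilon>0$, $T>0$, and let ${\boldsymbol u}\in C^{\frac{3+\alpha}{2},3+\alpha}_{loc}(\overline\Omega\times[0,T[,\mathcal N)$ satisfy ${\boldsymbol u}_t=\pi_{\boldsymbol u}(\operatorname{div}{\boldsymbol Z})$ in $]0,T[\times\Omega$, where ${\boldsymbol Z}=\nabla{\boldsymbol u}/\sqrt{\varepsilon^2+|\nabla{\boldsymbol u}|^2}$. Then \[\tfrac12\partial_t|\nabla{\boldsymbol u}|^2=\partial_{x^i}\big({\boldsymbol u}_{x^k}\cdot\partial_{x^k}{\boldsymbol Z}_i\big)-\pi_{\boldsymbol u}({\boldsymbol u}_{x^ix^j})\cdot\partial_{x^j}{\boldsymbol Z}_i+{\boldsymbol Z}_i\cdot\mathcal R^\mathcal N_{\boldsymbol u}({\boldsymbol u}_{x^i},{\boldsymbol u}_{x^j}){\boldsymbol u}_{x^j}\] in $]0,T[\times\Omega$ (summation over repeated indices $i,j,k=1,\dots,m$).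
   Context: $\pi_{\boldsymbol p}$ is the orthogonal projection of $\mathbb R^N$ onto $T_{\boldsymbol p}\mathcal N$; ${\boldsymbol Z}_i$ denotes the $i$-th ($\mathbb R^N$-valued) component of ${\boldsymbol Z}$, and dots denote Euclidean scalar products in $\mathbb R^N$. $\mathcal A_{\boldsymbol p}$ is the second fundamental form of $\mathcal N\subset\mathbb R^N$ at ${\boldsymbol p}$, and the Riemann tensor is normalized by the Gauss equation ${\boldsymbol W}\cdot\mathcal R^\mathcal N_{\boldsymbol p}({\boldsymbol X},{\boldsymbol Y}){\boldsymbol Z}=\mathcal A_{\boldsymbol p}({\boldsymbol Y},{\boldsymbol Z})\cdot\mathcal A_{\boldsymbol p}({\boldsymbol X},{\boldsymbol W})-\mathcal A_{\boldsymbol p}({\boldsymbol X},{\boldsymbol Z})\cdot\mathcal A_{\boldsymbol p}({\boldsymbol Y},{\boldsymbol W})$ for ${\boldsymbol X},{\boldsymbol Y},{\boldsymbol Z},{\boldsymbol W}\in T_{\boldsymbol p}\mathcal N$. The parabolic Hölder space $C^{\frac{3+\alpha}{2},3+\alpha}_{loc}$ is as in Ladyzhenskaya–Solonnikov–Ural'tseva, local in time on $[0,T[$. *)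

theory Defs
  imports "HOL-Analysis.Analysis"
begin

fun Ck_on :: "nat \<Rightarrow> 'a::real_normed_vector set \<Rightarrow> ('a \<Rightarrow> 'b::real_normed_vector) \<Rightarrow> bool" where
  "Ck_on 0 S f = continuous_on S f"
| "Ck_on (Suc k) S f =
     (\<exists>f'. (\<forall>x\<in>S. (f has_derivative f' x) (at x)) \<and> (\<forall>v. Ck_on k S (\<lambda>x. f' x v)))"

definition smooth_on :: "'a::real_normed_vector set \<Rightarrow> ('a \<Rightarrow> 'b::real_normed_vector) \<Rightarrow> bool" where
  "smooth_on S f \<longleftrightarrow> (\<forall>k. Ck_on k S f)"

definition smooth_submanifold :: "'n::euclidean_space set \<Rightarrow> nat \<Rightarrow> bool" where
  "smooth_submanifold M n \<longleftrightarrow>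
     (\<forall>p\<in>M. \<exists>U V (\<phi>::'n \<Rightarrow> 'n) \<psi> E.
        open U \<and> p \<in> U \<and> open V \<and> smooth_on U \<phi> \<and> smooth_on V \<psi> \<and>
        \<phi> ` U = V \<and> (\<forall>x\<in>U. \<psi> (\<phi> x) = x) \<and> (\<forall>y\<in>V. \<phi> (\<psi> y) = y) \<and>
        subspace E \<and> dim E = n \<and> \<phi> ` (M \<inter> U) = V \<inter> E)"

definition path_len :: "(real \<Rightarrow> 'n::euclidean_space) \<Rightarrow> real" where
  "path_len \<gamma> = integral {0..1} (\<lambda>t. norm (vector_derivative \<gamma> (at t)))"

definition intrinsic_dist :: "'n::euclidean_space set \<Rightarrow> 'n \<Rightarrow> 'n \<Rightarrow> real" where
  "intrinsic_dist M p q =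
     Inf {path_len \<gamma> | \<gamma>. \<gamma> C1_differentiable_on {0..1} \<and> \<gamma> ` {0..1} \<subseteq> M \<and> \<gamma> 0 = p \<and> \<gamma> 1 = q}"

definition intrinsically_complete :: "'n::euclidean_space set \<Rightarrow> bool" where
  "intrinsically_complete M \<longleftrightarrow>
     (\<forall>s::nat \<Rightarrow> 'n. (\<forall>k. s k \<in> M) \<and>
        (\<forall>e>0. \<exists>K. \<forall>k\<ge>K. \<forall>l\<ge>K. intrinsic_dist M (s k) (s l) < e) \<longrightarrow>
        (\<exists>p\<in>M. (\<lambda>k. intrinsic_dist M (s k) p) \<longlonglongrightarrow> 0))"

definition tangent_space :: "'n::euclidean_space set \<Rightarrow> 'n \<Rightarrow> 'n set" where
  "tangent_space M p = {v. \<exists>\<gamma>::real \<Rightarrow> 'n. \<gamma> 0 = p \<and> (\<gamma> has_vector_derivative v) (at 0) \<and>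
                                  (\<forall>\<^sub>F t in nhds 0. \<gamma> t \<in> M)}"

definition orth_proj :: "'n::euclidean_space set \<Rightarrow> 'n \<Rightarrow> 'n" where
  "orth_proj S v = (THE w. w \<in> S \<and> (\<forall>s\<in>S. (v - w) \<bullet> s = 0))"

definition tproj :: "'n::euclidean_space set \<Rightarrow> 'n \<Rightarrow> 'n \<Rightarrow> 'n" where
  "tproj M p v = orth_proj (tangent_space M p) v"

definition sff :: "'n::euclidean_space set \<Rightarrow> 'n \<Rightarrow> 'n \<Rightarrow> 'n \<Rightarrow> 'n" where
  "sff M p X Y = (SOME w. \<exists>(\<gamma>::real \<Rightarrow> 'n) V V'.
      \<gamma> 0 = p \<and> (\<gamma> has_vector_derivative X) (at 0) \<and>
      (\<forall>\<^sub>F t in nhds 0. \<gamma> t \<in> M \<and> V t \<in> tangent_space M (\<gamma> t)) \<and>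
      V 0 = Y \<and> (V has_vector_derivative V') (at 0) \<and> w = V' - tproj M p V')"

text \<open>Riemann tensor of the induced metric, normalised by the Gauss equation:
W . R_p(X,Y)Z = A_p(Y,Z).A_p(X,W) - A_p(X,Z).A_p(Y,W).\<close>
definition riem :: "'n::euclidean_space set \<Rightarrow> 'n \<Rightarrow> 'n \<Rightarrow> 'n \<Rightarrow> 'n \<Rightarrow> 'n \<Rightarrow> real" where
  "riem M p X Y Z W = sff M p Y Z \<bullet> sff M p X W - sff M p X Z \<bullet> sff M p Y W"

definition smooth_domain :: "'m::euclidean_space set \<Rightarrow> bool" where
  "smooth_domain \<Omega> \<longleftrightarrow> open \<Omega> \<and> bounded \<Omega> \<and> connected \<Omega> \<and> \<Omega> \<noteq> {} \<and>
     (\<forall>p\<in>frontier \<Omega>. \<exists>U (\<rho>::'m \<Rightarrow> real). open U \<and> p \<in> U \<and> smooth_on U \<rho> \<and>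
        (\<forall>x\<in>U. \<exists>D. (\<rho> has_derivative D) (at x) \<and> D \<noteq> (\<lambda>_. 0)) \<and>
        \<Omega> \<inter> U = {x\<in>U. \<rho> x < 0})"

definition pdx :: "'m::euclidean_space \<Rightarrow> (real \<Rightarrow> 'm \<Rightarrow> 'b::real_normed_vector) \<Rightarrow> real \<Rightarrow> 'm \<Rightarrow> 'b" where
  "pdx e f t x = vector_derivative (\<lambda>h. f t (x + h *\<^sub>R e)) (at 0)"

definition pdt :: "(real \<Rightarrow> 'm \<Rightarrow> 'b::real_normed_vector) \<Rightarrow> real \<Rightarrow> 'm \<Rightarrow> 'b" where
  "pdt f t x = vector_derivative (\<lambda>s. f s x) (at t)"

text \<open>pD ds r f = (partial along the directions ds, outermost first) of (d/dt)^r f.\<close>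
fun pD :: "'m::euclidean_space list \<Rightarrow> nat \<Rightarrow> (real \<Rightarrow> 'm \<Rightarrow> 'b::real_normed_vector) \<Rightarrow> real \<Rightarrow> 'm \<Rightarrow> 'b" where
  "pD [] 0 f = f"
| "pD [] (Suc r) f = pdt (pD [] r f)"
| "pD (e # ds) r f = pdx e (pD ds r f)"

definition admissible :: "'m::euclidean_space list \<Rightarrow> nat \<Rightarrow> bool" where
  "admissible ds r \<longleftrightarrow> set ds \<subseteq> Basis \<and> 2 * r + length ds \<le> 3"

text \<open>All derivatives D_t^r D_x^s u with 2r+s <= 3 exist classically in the open cylinder,
extend continuously to closure Omega x [0,T[, and on every closed cylinder up to time T' < T
satisfy the Ladyzhenskaya-Solonnikov-Ural'tseva Hoelder conditions: exponent a in x when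
2r+s = 3, exponent (3+a-2r-s)/2 in t when 2r+s is 2 or 3 (sup norms are bounded by continuity
on the compact closed cylinder; suprema over the open cylinder equal those over its closure).\<close>
definition parabolic_holder_3a_loc ::
    "real \<Rightarrow> 'm::euclidean_space set \<Rightarrow> real \<Rightarrow> (real \<Rightarrow> 'm \<Rightarrow> 'n::euclidean_space) \<Rightarrow> bool" where
  "parabolic_holder_3a_loc a \<Omega> T u \<longleftrightarrow>
     continuous_on ({0..<T} \<times> closure \<Omega>) (\<lambda>(t, x). u t x) \<and>
     (\<forall>e ds r. admissible (e # ds) r \<longrightarrow>
        (\<forall>t\<in>{0<..<T}. \<forall>x\<in>\<Omega>.
           ((\<lambda>h. pD ds r u t (x + h *\<^sub>R e)) has_vector_derivative pD (e # ds) r u t x) (at 0))) \<and>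
     (\<forall>r. admissible ([]::'m list) (Suc r) \<longrightarrow>
        (\<forall>t\<in>{0<..<T}. \<forall>x\<in>\<Omega>.
           ((\<lambda>s. pD [] r u s x) has_vector_derivative pD [] (Suc r) u t x) (at t))) \<and>
     (\<forall>ds r. admissible ds r \<longrightarrow>
        (\<exists>g. continuous_on ({0..<T} \<times> closure \<Omega>) g \<and>
             (\<forall>t\<in>{0<..<T}. \<forall>x\<in>\<Omega>. g (t, x) = pD ds r u t x))) \<and>
     (\<forall>T'. 0 < T' \<and> T' < T \<longrightarrow> (\<forall>ds r. admissible ds r \<longrightarrow>
        (2 * r + length ds = 3 \<longrightarrow>
           (\<exists>C. \<forall>t\<in>{0<..T'}. \<forall>x\<in>\<Omega>. \<forall>y\<in>\<Omega>.
              norm (pD ds r u t x - pD ds r u t y) \<le> C * norm (x - y) powr a)) \<and>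
        (2 \<le> 2 * r + length ds \<longrightarrow>
           (\<exists>C. \<forall>t\<in>{0<..T'}. \<forall>s\<in>{0<..T'}. \<forall>x\<in>\<Omega>.
              norm (pD ds r u t x - pD ds r u s x)
                \<le> C * \<bar>t - s\<bar> powr ((3 + a - real (2 * r + length ds)) / 2)))))"

end

theory Submission
  imports Defs
begin

text \<open>Write \<open>N = id - \<pi>\<^sub>u\<close> for the normal projection. Since \<open>u\<^sub>t = \<pi>\<^sub>u (div Z)\<close>, the vector
\<open>div Z - u\<^sub>t\<close> is normal, so \<open>u\<^sub>x\<^sub>k \<bullet> (div Z - u\<^sub>t) = 0\<close>; differentiating this along \<open>x\<^sup>k\<close> and
commuting derivatives gives \<open>u\<^sub>x\<^sub>k \<bullet> \<partial>\<^sub>k u\<^sub>t = u\<^sub>x\<^sub>k \<bullet> \<partial>\<^sub>i \<partial>\<^sub>k Z\<^sub>i + N u\<^sub>x\<^sub>k\<^sub>x\<^sub>k \<bullet> N (div Z)\<close>.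
On the other side \<open>u\<^sub>x\<^sub>i\<^sub>x\<^sub>j \<bullet> \<partial>\<^sub>j Z\<^sub>i - \<pi>\<^sub>u(u\<^sub>x\<^sub>i\<^sub>x\<^sub>j) \<bullet> \<partial>\<^sub>j Z\<^sub>i = N u\<^sub>x\<^sub>i\<^sub>x\<^sub>j \<bullet> N \<partial>\<^sub>j Z\<^sub>i\<close>, and the
remaining normal terms are the Gauss equation for the curvature term: the second fundamental form
of two tangent fields along a curve is the normal part of the derivative of the second one, so
\<open>A(u\<^sub>x\<^sub>i, u\<^sub>x\<^sub>j) = N u\<^sub>x\<^sub>i\<^sub>x\<^sub>j\<close> and \<open>A(u\<^sub>x\<^sub>j, Z\<^sub>i) = N \<partial>\<^sub>j Z\<^sub>i\<close>.
Only the openness of \<open>\<Omega>\<close>, two derivatives of the slice charts and the derivatives of \<open>u\<close> of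
parabolic order at most three enter.\<close>

subsection \<open>Derivatives along lines\<close>

lemma has_vector_derivative_difference_quotient:
  fixes f :: "real \<Rightarrow> 'v::real_normed_vector"
  assumes "(f has_vector_derivative f') (at x)"
  shows "((\<lambda>h. (f (x + h) - f x) /\<^sub>R h) \<longlongrightarrow> f') (at 0)"
proof -
  have "((\<lambda>y. norm (f y - f x - (y - x) *\<^sub>R f') / norm (y - x)) \<longlongrightarrow> 0) (at x)"
    using assms unfolding has_vector_derivative_def has_derivative_iff_norm by blast
  hence L: "((\<lambda>h. norm (f (x + h) - f x - h *\<^sub>R f') / norm h) \<longlongrightarrow> 0) (at 0)"
    by (subst (asm) LIM_offset_zero_iff) (auto simp: add.commute)
  have "norm (f (x + h) - f x - h *\<^sub>R f') / norm h = norm ((f (x + h) - f x) /\<^sub>R h - f')"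
    if "h \<noteq> 0" for h
  proof -
    have "(f (x + h) - f x) /\<^sub>R h - f' = (f (x + h) - f x - h *\<^sub>R f') /\<^sub>R h"
      using that by (simp add: scaleR_diff_right)
    thus ?thesis using that by (simp add: divide_inverse mult.commute)
  qed
  hence "((\<lambda>h. norm ((f (x + h) - f x) /\<^sub>R h - f')) \<longlongrightarrow> 0) (at 0)"
    by (intro Lim_transform_within[OF L, where d = 1]) auto
  thus ?thesis by (simp add: tendsto_norm_zero_iff LIM_zero_iff)
qed

lemma has_vector_derivative_at_0I:
  fixes f :: "real \<Rightarrow> 'v::real_normed_vector"
  assumes "\<And>e. e > 0 \<Longrightarrow> \<exists>d>0. \<forall>h. 0 < \<bar>h\<bar> \<and> \<bar>h\<bar> < d \<longrightarrow> norm (f h - f 0 - h *\<^sub>R K) \<le> e * \<bar>h\<bar>"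
  shows "(f has_vector_derivative K) (at 0)"
  unfolding has_vector_derivative_def has_derivative_iff_norm
proof (intro conjI bounded_linear_scaleR_left)
  show "((\<lambda>y. norm (f y - f 0 - (y - 0) *\<^sub>R K) / norm (y - 0)) \<longlongrightarrow> 0) (at 0)"
    unfolding Lim_at
  proof (intro allI impI)
    fix e :: real assume "e > 0"
    then obtain d where d: "d > 0"
      "\<forall>h. 0 < \<bar>h\<bar> \<and> \<bar>h\<bar> < d \<longrightarrow> norm (f h - f 0 - h *\<^sub>R K) \<le> (e / 2) * \<bar>h\<bar>"
      using assms[of "e / 2"] by auto
    have "norm (f h - f 0 - h *\<^sub>R K) / \<bar>h\<bar> < e" if "0 < \<bar>h\<bar>" "\<bar>h\<bar> < d" for h
    proof -
      have "norm (f h - f 0 - h *\<^sub>R K) / \<bar>h\<bar> \<le> e / 2"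
        using d that by (simp add: divide_simps)
      thus ?thesis using \<open>e > 0\<close> by linarith
    qed
    thus "\<exists>d>0. \<forall>x. 0 < dist x 0 \<and> dist x 0 < d \<longrightarrow>
        dist (norm (f x - f 0 - (x - 0) *\<^sub>R K) / norm (x - 0)) 0 < e"
      using d(1) by auto
  qed
qed

lemma has_vector_derivative_along_line_iff:
  fixes f :: "'a::real_normed_vector \<Rightarrow> 'b::real_normed_vector"
  assumes "z = w + \<alpha>\<^sub>0 *\<^sub>R v"
  shows "((\<lambda>h. f (z + h *\<^sub>R v)) has_vector_derivative D) (at 0) \<longleftrightarrow>
         ((\<lambda>\<alpha>. f (w + \<alpha> *\<^sub>R v)) has_vector_derivative D) (at \<alpha>\<^sub>0)"
proof -
  have shift: "(\<lambda>\<alpha>. f (w + \<alpha> *\<^sub>R v)) = (\<lambda>h. f (z + h *\<^sub>R v)) \<circ> (\<lambda>\<alpha>. \<alpha> - \<alpha>\<^sub>0)"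
    "(\<lambda>h. f (z + h *\<^sub>R v)) = (\<lambda>\<alpha>. f (w + \<alpha> *\<^sub>R v)) \<circ> (\<lambda>h. \<alpha>\<^sub>0 + h)"
    using assms by (auto simp: fun_eq_iff algebra_simps)
  have d1: "((\<lambda>\<alpha>. \<alpha> - \<alpha>\<^sub>0) has_vector_derivative 1) (at \<alpha>\<^sub>0)"
    and d2: "((\<lambda>h. \<alpha>\<^sub>0 + h) has_vector_derivative 1) (at 0)"
    by (auto intro!: derivative_eq_intros)
  show ?thesis
  proof
    assume "((\<lambda>h. f (z + h *\<^sub>R v)) has_vector_derivative D) (at 0)"
    thus "((\<lambda>\<alpha>. f (w + \<alpha> *\<^sub>R v)) has_vector_derivative D) (at \<alpha>\<^sub>0)"
      using vector_diff_chain_at[OF d1, of "\<lambda>h. f (z + h *\<^sub>R v)" D] unfolding shift(1) by simp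
  next
    assume "((\<lambda>\<alpha>. f (w + \<alpha> *\<^sub>R v)) has_vector_derivative D) (at \<alpha>\<^sub>0)"
    thus "((\<lambda>h. f (z + h *\<^sub>R v)) has_vector_derivative D) (at 0)"
      using vector_diff_chain_at[OF d2, of "\<lambda>\<alpha>. f (w + \<alpha> *\<^sub>R v)" D] unfolding shift(2) by simp
  qed
qed

lemma has_vector_derivative_at_0_iff_shift:
  fixes f :: "real \<Rightarrow> 'b::real_normed_vector"
  shows "((\<lambda>h. f (t + h)) has_vector_derivative D) (at 0) \<longleftrightarrow> (f has_vector_derivative D) (at t)"
  using has_vector_derivative_along_line_iff[of t 0 t 1 f D] by simp

lemma norm_linearization_le:
  fixes g :: "real \<Rightarrow> 'v::real_normed_vector"
  assumes g': "\<And>x. \<bar>x\<bar> < d \<Longrightarrow> (g has_vector_derivative g' x) (at x)"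
    and near: "\<And>x. \<bar>x\<bar> < d \<Longrightarrow> norm (g' x - K) \<le> c" and b: "\<bar>b\<bar> < d"
  shows "norm (g b - g 0 - b *\<^sub>R K) \<le> 3 * c * \<bar>b\<bar>"
proof -
  have "norm (g b - g 0 - (b - 0) *\<^sub>R g' 0) \<le> norm (b - 0) * (2 * c)"
  proof (rule vector_differentiable_bound_linearization[where S = "{-d<..<d}"])
    fix x assume "x \<in> {-d<..<d}"
    hence x: "\<bar>x\<bar> < d" by auto
    thus "(g has_vector_derivative g' x) (at x within {-d<..<d})"
      using g' by (auto intro: has_vector_derivative_at_within)
    have "norm (g' x - g' 0) \<le> norm (g' x - K) + norm (g' 0 - K)"
      using norm_triangle_ineq4[of "g' x - K" "g' 0 - K"] by simp
    moreover have "\<bar>0::real\<bar> < d" using x by linarith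
    ultimately show "norm (g' x - g' 0) \<le> 2 * c" using near[of x] near[of 0] x by linarith
  next
    show "closed_segment 0 b \<subseteq> {-d<..<d}"
      using b by (intro closed_segment_subset) (auto simp: convex_real_interval)
  qed (use b in auto)
  moreover have "norm (b *\<^sub>R (g' 0 - K)) \<le> \<bar>b\<bar> * c"
    using near[of 0] b by (auto intro!: mult_left_mono)
  moreover have "norm (g b - g 0 - b *\<^sub>R K)
      \<le> norm (g b - g 0 - (b - 0) *\<^sub>R g' 0) + norm (b *\<^sub>R (g' 0 - K))"
    by (rule order_trans[OF _ norm_triangle_ineq]) (simp add: algebra_simps)
  ultimately show ?thesis by (simp add: algebra_simps)
qed

text \<open>Two mean value estimates keep the second difference \<open>F a b - F a 0 - F 0 b + F 0 0\<close> within
\<open>9 c \<bar>a\<bar> \<bar>b\<bar>\<close> of \<open>a b K\<close>; dividing by \<open>b\<close> and letting \<open>b \<rightarrow> 0\<close> gives the same bound for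
\<open>Fb a - Fb 0 - a K\<close>.\<close>

lemma mixed_partial_derivative_symmetric:
  fixes F Fa G :: "real \<Rightarrow> real \<Rightarrow> 'v::real_normed_vector" and Fb :: "real \<Rightarrow> 'v"
  assumes "\<delta> > 0"
    and D1: "\<And>\<alpha> \<beta>. \<bar>\<alpha>\<bar> < \<delta> \<Longrightarrow> \<bar>\<beta>\<bar> < \<delta> \<Longrightarrow> ((\<lambda>a. F a \<beta>) has_vector_derivative Fa \<alpha> \<beta>) (at \<alpha>)"
    and D2: "\<And>\<alpha>. \<bar>\<alpha>\<bar> < \<delta> \<Longrightarrow> ((\<lambda>b. F \<alpha> b) has_vector_derivative Fb \<alpha>) (at 0)"
    and D12: "\<And>\<alpha> \<beta>. \<bar>\<alpha>\<bar> < \<delta> \<Longrightarrow> \<bar>\<beta>\<bar> < \<delta> \<Longrightarrow> ((\<lambda>b. Fa \<alpha> b) has_vector_derivative G \<alpha> \<beta>) (at \<beta>)"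
    and cont: "isCont (\<lambda>(\<alpha>, \<beta>). G \<alpha> \<beta>) (0, 0)"
  shows "(Fb has_vector_derivative G 0 0) (at 0)"
proof (rule has_vector_derivative_at_0I)
  fix e :: real assume "e > 0"
  define K where "K = G 0 0"
  define c where "c = e / 9"
  obtain d1 where d1: "d1 > 0" "\<And>z. dist z (0, 0) < d1 \<Longrightarrow> dist (case z of (\<alpha>, \<beta>) \<Rightarrow> G \<alpha> \<beta>) K < c"
  proof -
    have "c > 0" using \<open>e > 0\<close> by (simp add: c_def)
    thus ?thesis using cont that unfolding continuous_at_eps_delta K_def by auto
  qed
  define d0 where "d0 = d1 / 2"
  have d0: "d0 > 0" "norm (G \<alpha> \<beta> - K) \<le> c" if "\<bar>\<alpha>\<bar> < d0" "\<bar>\<beta>\<bar> < d0" for \<alpha> \<beta>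
  proof -
    have "dist (\<alpha>, \<beta>) (0, 0) \<le> \<bar>\<alpha>\<bar> + \<bar>\<beta>\<bar>"
      by (simp add: dist_Pair_Pair sqrt_sum_squares_le_sum_abs)
    thus "d0 > 0" "norm (G \<alpha> \<beta> - K) \<le> c"
      using that d1(2)[of "(\<alpha>, \<beta>)"] by (auto simp: d0_def dist_norm)
  qed
  define d where "d = min d0 \<delta>"
  have d: "d > 0" using d1(1) \<open>\<delta> > 0\<close> by (simp add: d_def d0_def)
  have Fa_lin: "norm (Fa s b - Fa s 0 - b *\<^sub>R K) \<le> 3 * c * \<bar>b\<bar>" if "\<bar>s\<bar> < d" "\<bar>b\<bar> < d" for s b
  proof (rule norm_linearization_le[where g' = "G s"])
    fix x :: real assume "\<bar>x\<bar> < d"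
    thus "(Fa s has_vector_derivative G s x) (at x)" "norm (G s x - K) \<le> c"
      using that D12[of s x] d0(2)[of s x] by (auto simp: d_def)
  qed (rule that(2))
  have F_lin: "norm (F a b - F a 0 - F 0 b + F 0 0 - (a * b) *\<^sub>R K) \<le> 9 * c * \<bar>a\<bar> * \<bar>b\<bar>"
    if a: "\<bar>a\<bar> < d" and b: "\<bar>b\<bar> < d" for a b
  proof -
    have "norm ((F a b - F a 0 - (a * b) *\<^sub>R K) - (F 0 b - F 0 0 - (0 * b) *\<^sub>R K) - a *\<^sub>R 0)
        \<le> 3 * (3 * c * \<bar>b\<bar>) * \<bar>a\<bar>"
    proof (rule norm_linearization_le[where g' = "\<lambda>s. Fa s b - Fa s 0 - b *\<^sub>R K"])
      fix x :: real assume "\<bar>x\<bar> < d"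
      thus "((\<lambda>s. F s b - F s 0 - (s * b) *\<^sub>R K) has_vector_derivative Fa x b - Fa x 0 - b *\<^sub>R K) (at x)"
        using D1[of x b] D1[of x 0] b by (auto simp: d_def intro!: derivative_eq_intros)
      show "norm (Fa x b - Fa x 0 - b *\<^sub>R K - 0) \<le> 3 * c * \<bar>b\<bar>"
        using Fa_lin \<open>\<bar>x\<bar> < d\<close> b by simp
    qed (rule a)
    thus ?thesis by (simp add: algebra_simps)
  qed
  have "norm (Fb h - Fb 0 - h *\<^sub>R K) \<le> 9 * c * \<bar>h\<bar>" if h: "0 < \<bar>h\<bar>" "\<bar>h\<bar> < d" for h
  proof (rule Lim_norm_ubound[of "at 0"])
    show "((\<lambda>\<beta>. (F h (0 + \<beta>) - F h 0) /\<^sub>R \<beta> - (F 0 (0 + \<beta>) - F 0 0) /\<^sub>R \<beta> - h *\<^sub>R K)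
        \<longlongrightarrow> Fb h - Fb 0 - h *\<^sub>R K) (at 0)"
      using h d by (intro tendsto_intros has_vector_derivative_difference_quotient D2) (auto simp: d_def)
    have "norm ((F h \<beta> - F h 0) /\<^sub>R \<beta> - (F 0 \<beta> - F 0 0) /\<^sub>R \<beta> - h *\<^sub>R K) \<le> 9 * c * \<bar>h\<bar>"
      if "0 < \<bar>\<beta>\<bar>" "\<bar>\<beta>\<bar> < d" for \<beta>
    proof -
      have "(F h \<beta> - F h 0) /\<^sub>R \<beta> - (F 0 \<beta> - F 0 0) /\<^sub>R \<beta> - h *\<^sub>R K
          = (F h \<beta> - F h 0 - F 0 \<beta> + F 0 0 - (h * \<beta>) *\<^sub>R K) /\<^sub>R \<beta>"
        using that by (simp add: algebra_simps scaleR_diff_right)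
      thus ?thesis
        using F_lin[of h \<beta>] h that by (simp add: divide_simps mult_ac)
    qed
    thus "\<forall>\<^sub>F \<beta> in at 0. norm ((F h (0 + \<beta>) - F h 0) /\<^sub>R \<beta> - (F 0 (0 + \<beta>) - F 0 0) /\<^sub>R \<beta> - h *\<^sub>R K)
        \<le> 9 * c * \<bar>h\<bar>"
      unfolding eventually_at using d by (intro exI[of _ d]) auto
  qed simp
  thus "\<exists>d>0. \<forall>h. 0 < \<bar>h\<bar> \<and> \<bar>h\<bar> < d \<longrightarrow> norm (Fb h - Fb 0 - h *\<^sub>R G 0 0) \<le> e * \<bar>h\<bar>"
    using d by (auto simp: K_def c_def)
qed

definition has_dir_deriv_on ::
    "'a::real_normed_vector set \<Rightarrow> 'a \<Rightarrow> ('a \<Rightarrow> 'b::real_normed_vector) \<Rightarrow> ('a \<Rightarrow> 'b) \<Rightarrow> bool" where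
  "has_dir_deriv_on S v f f' \<longleftrightarrow> (\<forall>y\<in>S. ((\<lambda>h. f (y + h *\<^sub>R v)) has_vector_derivative f' y) (at 0))"

lemma has_dir_deriv_onD:
  "has_dir_deriv_on S v f f' \<Longrightarrow> y \<in> S \<Longrightarrow> ((\<lambda>h. f (y + h *\<^sub>R v)) has_vector_derivative f' y) (at 0)"
  by (simp add: has_dir_deriv_on_def)

lemma has_dir_deriv_on_mixed_partial:
  fixes f fv fw fvw :: "'a::real_normed_vector \<Rightarrow> 'b::real_normed_vector"
  assumes S: "open S" "x \<in> S"
    and fv: "has_dir_deriv_on S v f fv" and fw: "has_dir_deriv_on S w f fw"
    and fvw: "has_dir_deriv_on S w fv fvw" and cont: "isCont fvw x"
  shows "((\<lambda>h. fw (x + h *\<^sub>R v)) has_vector_derivative fvw x) (at 0)"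
proof -
  define c where "c = norm v + norm w + 1"
  have c: "c > 0" "norm v + norm w < c" by (auto simp: c_def add_nonneg_pos)
  define P where "P \<alpha> \<beta> = x + \<alpha> *\<^sub>R v + \<beta> *\<^sub>R w" for \<alpha> \<beta>
  have P_near: "dist (P \<alpha> \<beta>) x < \<rho>" if "\<rho> > 0" "\<bar>\<alpha>\<bar> < \<rho> / c" "\<bar>\<beta>\<bar> < \<rho> / c" for \<rho> \<alpha> \<beta>
  proof -
    have "dist (P \<alpha> \<beta>) x \<le> \<bar>\<alpha>\<bar> * norm v + \<bar>\<beta>\<bar> * norm w"
      using norm_triangle_ineq[of "\<alpha> *\<^sub>R v" "\<beta> *\<^sub>R w"] by (simp add: P_def dist_norm add.assoc)
    also have "\<dots> \<le> \<rho> / c * (norm v + norm w)"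
      unfolding distrib_left using that by (intro add_mono mult_right_mono) auto
    also have "\<dots> < \<rho> / c * c" using that c by (intro mult_strict_left_mono) auto
    finally show ?thesis using c by simp
  qed
  obtain r where r: "r > 0" "ball x r \<subseteq> S" using S open_contains_ball by blast
  define \<delta> where "\<delta> = r / c"
  have P_in: "P \<alpha> \<beta> \<in> S" if "\<bar>\<alpha>\<bar> < \<delta>" "\<bar>\<beta>\<bar> < \<delta>" for \<alpha> \<beta>
    using P_near[OF r(1)] that r(2) by (auto simp: \<delta>_def dist_commute)
  have "((\<lambda>\<alpha>. fw (P \<alpha> 0)) has_vector_derivative fvw (P 0 0)) (at 0)"
  proof (rule mixed_partial_derivative_symmetric[where F = "\<lambda>\<alpha> \<beta>. f (P \<alpha> \<beta>)"
        and Fa = "\<lambda>\<alpha> \<beta>. fv (P \<alpha> \<beta>)" and G = "\<lambda>\<alpha> \<beta>. fvw (P \<alpha> \<beta>)" and \<delta> = \<delta>])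
    show "\<delta> > 0" using r c by (simp add: \<delta>_def)
  next
    fix \<alpha> \<beta> assume h: "\<bar>\<alpha>\<bar> < \<delta>" "\<bar>\<beta>\<bar> < \<delta>"
    show "((\<lambda>a. f (P a \<beta>)) has_vector_derivative fv (P \<alpha> \<beta>)) (at \<alpha>)"
      using has_dir_deriv_onD[OF fv P_in[OF h]]
        has_vector_derivative_along_line_iff[of "P \<alpha> \<beta>" "x + \<beta> *\<^sub>R w" \<alpha> v f]
      by (simp add: P_def algebra_simps)
    show "((\<lambda>b. fv (P \<alpha> b)) has_vector_derivative fvw (P \<alpha> \<beta>)) (at \<beta>)"
      using has_dir_deriv_onD[OF fvw P_in[OF h]]
        has_vector_derivative_along_line_iff[of "P \<alpha> \<beta>" "x + \<alpha> *\<^sub>R v" \<beta> w fv]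
      by (simp add: P_def algebra_simps)
  next
    fix \<alpha> assume "\<bar>\<alpha>\<bar> < \<delta>"
    moreover have "\<bar>0::real\<bar> < \<delta>" using r c by (simp add: \<delta>_def)
    ultimately show "((\<lambda>b. f (P \<alpha> b)) has_vector_derivative fw (P \<alpha> 0)) (at 0)"
      using has_dir_deriv_onD[OF fw P_in[of \<alpha> 0]] by (simp add: P_def)
  next
    have "isCont (\<lambda>(\<alpha>, \<beta>). P \<alpha> \<beta>) (0, 0)"
      unfolding P_def case_prod_beta' by (intro continuous_intros)
    thus "isCont (\<lambda>(\<alpha>, \<beta>). fvw (P \<alpha> \<beta>)) (0, 0)"
      using continuous_at_compose[of "(0, 0)" "\<lambda>(\<alpha>, \<beta>). P \<alpha> \<beta>" fvw] cont
      by (simp add: P_def o_def case_prod_beta')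
  qed
  thus ?thesis by (simp add: P_def)
qed

lemma has_dir_deriv_on_const: "has_dir_deriv_on S v (\<lambda>y. c) (\<lambda>y. 0)"
  unfolding has_dir_deriv_on_def by simp

lemma has_dir_deriv_on_add:
  "has_dir_deriv_on S v f f' \<Longrightarrow> has_dir_deriv_on S v g g' \<Longrightarrow>
   has_dir_deriv_on S v (\<lambda>y. f y + g y) (\<lambda>y. f' y + g' y)"
  unfolding has_dir_deriv_on_def by (auto intro: has_vector_derivative_add)

lemma has_dir_deriv_on_diff:
  "has_dir_deriv_on S v f f' \<Longrightarrow> has_dir_deriv_on S v g g' \<Longrightarrow>
   has_dir_deriv_on S v (\<lambda>y. f y - g y) (\<lambda>y. f' y - g' y)"
  unfolding has_dir_deriv_on_def by (auto intro: has_vector_derivative_diff)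

lemma has_dir_deriv_on_sum:
  "(\<And>i. i \<in> I \<Longrightarrow> has_dir_deriv_on S v (f i) (f' i)) \<Longrightarrow>
   has_dir_deriv_on S v (\<lambda>y. \<Sum>i\<in>I. f i y) (\<lambda>y. \<Sum>i\<in>I. f' i y)"
  unfolding has_dir_deriv_on_def by (auto intro!: has_vector_derivative_sum)

lemma has_dir_deriv_on_inner:
  fixes f g :: "'a::real_normed_vector \<Rightarrow> 'b::real_inner"
  shows "has_dir_deriv_on S v f f' \<Longrightarrow> has_dir_deriv_on S v g g' \<Longrightarrow>
    has_dir_deriv_on S v (\<lambda>y. f y \<bullet> g y) (\<lambda>y. f y \<bullet> g' y + f' y \<bullet> g y)"
  unfolding has_dir_deriv_on_def
  using bounded_bilinear.has_vector_derivative[OF bounded_bilinear_inner] by fastforce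

lemma has_dir_deriv_on_scaleR:
  fixes f :: "'a::real_normed_vector \<Rightarrow> real"
  shows "has_dir_deriv_on S v f f' \<Longrightarrow> has_dir_deriv_on S v g g' \<Longrightarrow>
    has_dir_deriv_on S v (\<lambda>y. f y *\<^sub>R g y) (\<lambda>y. f y *\<^sub>R g' y + f' y *\<^sub>R g y)"
  unfolding has_dir_deriv_on_def
  using bounded_bilinear.has_vector_derivative[OF bounded_bilinear_scaleR] by fastforce

lemma has_dir_deriv_on_mult:
  fixes f g :: "'a::real_normed_vector \<Rightarrow> real"
  shows "has_dir_deriv_on S v f f' \<Longrightarrow> has_dir_deriv_on S v g g' \<Longrightarrow>
    has_dir_deriv_on S v (\<lambda>y. f y * g y) (\<lambda>y. f y * g' y + f' y * g y)"
  using has_dir_deriv_on_scaleR[of S v f f' g g'] by simp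

lemma has_dir_deriv_on_mult_left:
  fixes f :: "'a::real_normed_vector \<Rightarrow> real"
  shows "has_dir_deriv_on S v f f' \<Longrightarrow> has_dir_deriv_on S v (\<lambda>y. c * f y) (\<lambda>y. c * f' y)"
  by (drule has_dir_deriv_on_mult[OF has_dir_deriv_on_const[of S v c]]) simp

lemma has_dir_deriv_on_norm_power2:
  fixes f :: "'a::real_normed_vector \<Rightarrow> 'b::real_inner"
  shows "has_dir_deriv_on S v f f' \<Longrightarrow>
    has_dir_deriv_on S v (\<lambda>y. norm (f y) ^ 2) (\<lambda>y. 2 * (f y \<bullet> f' y))"
  using has_dir_deriv_on_inner[of S v f f' f f'] by (simp add: power2_norm_eq_inner inner_commute)

lemma has_dir_deriv_on_compose:
  fixes f :: "'a::real_normed_vector \<Rightarrow> real"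
  assumes "has_dir_deriv_on S v f f'" "\<And>y. y \<in> S \<Longrightarrow> (g has_real_derivative g' (f y)) (at (f y))"
  shows "has_dir_deriv_on S v (\<lambda>y. g (f y)) (\<lambda>y. f' y * g' (f y))"
  using field_vector_diff_chain_at[OF has_dir_deriv_onD[OF assms(1)] assms(2)]
  unfolding has_dir_deriv_on_def by (simp add: o_def)

lemma has_dir_deriv_on_cong:
  assumes S: "open S" and f: "has_dir_deriv_on S v f f'" and eq: "\<And>y. y \<in> S \<Longrightarrow> g y = f y"
  shows "has_dir_deriv_on S v g f'"
  unfolding has_dir_deriv_on_def
proof
  fix y assume y: "y \<in> S"
  have "open ((\<lambda>h. y + h *\<^sub>R v) -` S)"
    by (rule continuous_open_vimage[OF S]) (intro continuous_intros)
  thus "((\<lambda>h. g (y + h *\<^sub>R v)) has_vector_derivative f' y) (at 0)"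
    by (rule has_vector_derivative_transform_within_open[OF has_dir_deriv_onD[OF f y]])
       (use y eq in auto)
qed

lemma has_dir_deriv_on_unique:
  "has_dir_deriv_on S v f f' \<Longrightarrow> has_dir_deriv_on S v f f'' \<Longrightarrow> y \<in> S \<Longrightarrow> f' y = f'' y"
  unfolding has_dir_deriv_on_def using vector_derivative_unique_at by blast

lemma has_dir_deriv_on_eq_0:
  assumes "open S" "has_dir_deriv_on S v f f'" "\<And>y. y \<in> S \<Longrightarrow> f y = 0" "y \<in> S"
  shows "f' y = 0"
  using has_dir_deriv_on_unique[OF assms(2) has_dir_deriv_on_cong[OF assms(1) has_dir_deriv_on_const]]
    assms(3,4) by metis

lemma pdx_eqI: "has_dir_deriv_on S e (f t) f' \<Longrightarrow> y \<in> S \<Longrightarrow> pdx e f t y = f' y"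
  unfolding pdx_def has_dir_deriv_on_def using vector_derivative_at by blast

subsection \<open>Tangent spaces and the second fundamental form\<close>

lemma isCont_eventually_in_open:
  assumes "isCont \<gamma> x" "open U" "\<gamma> x \<in> U"
  shows "\<forall>\<^sub>F t in nhds x. \<gamma> t \<in> U"
proof -
  have "\<forall>\<^sub>F t in at x. \<gamma> t \<in> U"
    using assms unfolding isCont_def by (rule topological_tendstoD)
  hence "\<forall>\<^sub>F t in nhds x. t \<noteq> x \<longrightarrow> \<gamma> t \<in> U" by (simp add: eventually_at_filter)
  thus ?thesis by eventually_elim (use assms(3) in auto)
qed

lemma has_vector_derivative_in_subspace:
  fixes c :: "real \<Rightarrow> 'a::euclidean_space"
  assumes E: "subspace E" and c: "(c has_vector_derivative c') (at 0)"
    and ev: "\<forall>\<^sub>F h in nhds 0. c h \<in> E"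
  shows "c' \<in> E"
proof -
  have "c 0 \<in> E" using eventually_nhds_x_imp_x[OF ev] .
  hence "\<forall>\<^sub>F h in at 0. (c (0 + h) - c 0) /\<^sub>R h \<in> E"
    using ev unfolding eventually_at_filter
    by eventually_elim (use E \<open>c 0 \<in> E\<close> in \<open>auto intro: subspace_scale subspace_diff\<close>)
  thus ?thesis
    using Lim_in_closed_set[OF closed_subspace[OF E] _ _ has_vector_derivative_difference_quotient[OF c]]
    by auto
qed

lemma has_vector_derivative_compose:
  assumes "(\<gamma> has_vector_derivative v) (at t)" "(f has_derivative f') (at (\<gamma> t))"
  shows "((\<lambda>s. f (\<gamma> s)) has_vector_derivative f' v) (at t)"
  using vector_derivative_diff_chain_within[OF assms(1) has_derivative_at_withinI[OF assms(2)]]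
  by (simp add: o_def)

lemma tangent_space_subset_chart:
  fixes M :: "'a::euclidean_space set" and \<phi> :: "'a \<Rightarrow> 'b::euclidean_space"
  assumes U: "open U" "q \<in> U" and E: "subspace E" and into: "\<phi> ` (M \<inter> U) \<subseteq> E"
    and \<phi>': "(\<phi> has_derivative \<phi>') (at q)"
  shows "tangent_space M q \<subseteq> {v. \<phi>' v \<in> E}"
proof
  fix v assume "v \<in> tangent_space M q"
  then obtain \<gamma> where \<gamma>: "\<gamma> 0 = q" "(\<gamma> has_vector_derivative v) (at 0)" "\<forall>\<^sub>F t in nhds 0. \<gamma> t \<in> M"
    unfolding tangent_space_def by blast
  have "\<forall>\<^sub>F t in nhds 0. \<gamma> t \<in> U"
    using has_vector_derivative_continuous[OF \<gamma>(2)] U \<gamma>(1) by (intro isCont_eventually_in_open) auto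
  with \<gamma>(3) have "\<forall>\<^sub>F t in nhds 0. \<phi> (\<gamma> t) \<in> E"
    by eventually_elim (use into in auto)
  moreover have "((\<lambda>t. \<phi> (\<gamma> t)) has_vector_derivative \<phi>' v) (at 0)"
    using has_vector_derivative_compose[OF \<gamma>(2)] \<phi>' \<gamma>(1) by simp
  ultimately show "v \<in> {v. \<phi>' v \<in> E}"
    using has_vector_derivative_in_subspace[OF E] by auto
qed

lemma tangent_space_of_chart_inverse:
  fixes \<psi> :: "'a::euclidean_space \<Rightarrow> 'b::euclidean_space"
  assumes V: "open V" "p \<in> V" and E: "subspace E" "p \<in> E" "w \<in> E"
    and into: "\<And>y. y \<in> V \<inter> E \<Longrightarrow> \<psi> y \<in> M" and \<psi>': "(\<psi> has_derivative \<psi>') (at p)"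
  shows "\<psi>' w \<in> tangent_space M (\<psi> p)"
  unfolding tangent_space_def
proof (intro CollectI exI conjI)
  have "\<forall>\<^sub>F h in nhds 0. p + h *\<^sub>R w \<in> V"
    using V by (intro isCont_eventually_in_open) (auto intro!: continuous_intros)
  thus "\<forall>\<^sub>F h in nhds 0. \<psi> (p + h *\<^sub>R w) \<in> M"
    by eventually_elim (use E into in \<open>auto intro: subspace_add subspace_scale\<close>)
  have "((\<lambda>h. p + h *\<^sub>R w) has_vector_derivative w) (at 0)"
    by (auto intro!: derivative_eq_intros)
  thus "((\<lambda>h. \<psi> (p + h *\<^sub>R w)) has_vector_derivative \<psi>' w) (at 0)"
    using has_vector_derivative_compose[of _ w 0 \<psi> \<psi>'] \<psi>' by simp
qed simp

lemma has_derivative_left_inverse: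
  assumes U: "open U" "q \<in> U" and inv: "\<forall>x\<in>U. \<psi> (\<phi> x) = x"
    and \<phi>': "(\<phi> has_derivative \<phi>') (at q)" and \<psi>': "(\<psi> has_derivative \<psi>') (at (\<phi> q))"
  shows "\<psi>' (\<phi>' v) = v"
proof -
  have "((\<psi> \<circ> \<phi>) has_derivative \<psi>' \<circ> \<phi>') (at q)"
    using diff_chain_at[OF \<phi>' \<psi>'] .
  moreover have "((\<psi> \<circ> \<phi>) has_derivative id) (at q)"
    by (rule has_derivative_transform_within_open[OF has_derivative_id U]) (use inv in auto)
  ultimately have "\<psi>' \<circ> \<phi>' = id" by (rule has_derivative_unique)
  thus ?thesis by (simp add: fun_eq_iff)
qed

lemma submanifold_chart:
  fixes M :: "'a::euclidean_space set"
  assumes "smooth_submanifold M n" "p \<in> M"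
  obtains U and \<phi> :: "'a \<Rightarrow> 'a" and \<phi>' \<phi>'' E where "open U" "p \<in> U" "subspace E"
    "\<And>x. x \<in> U \<Longrightarrow> (\<phi> has_derivative \<phi>' x) (at x)"
    "\<And>x v. x \<in> U \<Longrightarrow> ((\<lambda>y. \<phi>' y v) has_derivative \<phi>'' v x) (at x)"
    "\<And>q. q \<in> M \<Longrightarrow> q \<in> U \<Longrightarrow> tangent_space M q = {v. \<phi>' q v \<in> E}"
proof -
  obtain U V and \<phi> :: "'a \<Rightarrow> 'a" and \<psi> E where chart: "open U" "p \<in> U" "open V"
    "smooth_on U \<phi>" "smooth_on V \<psi>" "\<phi> ` U = V" "\<forall>x\<in>U. \<psi> (\<phi> x) = x"
    "subspace E" "\<phi> ` (M \<inter> U) = V \<inter> E"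
    using assms(1)[unfolded smooth_submanifold_def, rule_format, OF assms(2)] by blast
  have "Ck_on (Suc (Suc 0)) U \<phi>" using chart(4) unfolding smooth_on_def by blast
  then obtain \<phi>' where \<phi>': "\<forall>x\<in>U. (\<phi> has_derivative \<phi>' x) (at x)"
    and "\<forall>v. \<exists>f. \<forall>x\<in>U. ((\<lambda>x. \<phi>' x v) has_derivative f x) (at x)"
    by (simp only: Ck_on.simps) blast
  then obtain \<phi>'' where \<phi>'': "\<forall>v. \<forall>x\<in>U. ((\<lambda>x. \<phi>' x v) has_derivative \<phi>'' v x) (at x)"
    by metis
  have "Ck_on (Suc 0) V \<psi>" using chart(5) unfolding smooth_on_def by blast
  then obtain \<psi>' where \<psi>': "\<forall>y\<in>V. (\<psi> has_derivative \<psi>' y) (at y)" by auto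
  have inverse: "\<psi>' (\<phi> q) (\<phi>' q v) = v" if "q \<in> U" for q v
    by (rule has_derivative_left_inverse[where \<phi> = \<phi> and \<psi> = \<psi>, OF chart(1) that chart(7)])
       (use \<phi>' \<psi>' chart(6) that in auto)
  have into: "\<psi> y \<in> M" if "y \<in> V \<inter> E" for y
  proof -
    have "y \<in> \<phi> ` (M \<inter> U)" using that chart(9) by simp
    then obtain x where "x \<in> M \<inter> U" "y = \<phi> x" by blast
    thus ?thesis using chart(7) by auto
  qed
  have "tangent_space M q = {v. \<phi>' q v \<in> E}" if q: "q \<in> M" "q \<in> U" for q
  proof
    show "tangent_space M q \<subseteq> {v. \<phi>' q v \<in> E}"
      using chart(1,8,9) q \<phi>' by (intro tangent_space_subset_chart[where U = U and \<phi> = \<phi>]) auto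
    have "\<phi> q \<in> V \<inter> E" using chart(9) q by blast
    moreover have "\<psi> (\<phi> q) = q" using chart(7) q by blast
    ultimately have "\<psi>' (\<phi> q) w \<in> tangent_space M q" if "w \<in> E" for w
      using tangent_space_of_chart_inverse[where \<psi> = \<psi> and \<psi>' = "\<psi>' (\<phi> q)" and p = "\<phi> q",
          OF chart(3) _ chart(8) _ that into] \<psi>' by simp
    thus "{v. \<phi>' q v \<in> E} \<subseteq> tangent_space M q" using inverse[OF q(2)] by (metis CollectD subsetI)
  qed
  thus ?thesis using chart(1,2,8) \<phi>' \<phi>'' by (intro that) auto
qed

lemma tangent_space_subspace:
  assumes "smooth_submanifold M n" "p \<in> M"
  shows "subspace (tangent_space M p)"
proof (rule submanifold_chart[OF assms])
  fix U E and \<phi>' :: "'a \<Rightarrow> 'a \<Rightarrow> 'a" and \<phi> :: "'a \<Rightarrow> 'a"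
  assume "open U" "p \<in> U" "subspace E" "\<And>x. x \<in> U \<Longrightarrow> (\<phi> has_derivative \<phi>' x) (at x)"
    "\<And>q. q \<in> M \<Longrightarrow> q \<in> U \<Longrightarrow> tangent_space M q = {v. \<phi>' q v \<in> E}"
  hence "tangent_space M p = {v. \<phi>' p v \<in> E}" "linear (\<phi>' p)"
    using assms(2) has_derivative_linear by blast+
  thus "subspace (tangent_space M p)"
    using linear_subspace_linear_preimage[of "\<phi>' p" E] \<open>subspace E\<close> by simp
qed

lemma orth_proj_eqI:
  fixes S :: "'a::euclidean_space set"
  assumes S: "subspace S" and w: "w \<in> S" and orth: "\<forall>s\<in>S. (v - w) \<bullet> s = 0"
  shows "orth_proj S v = w"
  unfolding orth_proj_def
proof (rule the_equality)
  show "w \<in> S \<and> (\<forall>s\<in>S. (v - w) \<bullet> s = 0)" using w orth by blast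
next
  fix w' assume w': "w' \<in> S \<and> (\<forall>s\<in>S. (v - w') \<bullet> s = 0)"
  have "w' - w \<in> S" using S w w' by (intro subspace_diff) auto
  have "(w' - w) \<bullet> (w' - w) = (v - w) \<bullet> (w' - w) - (v - w') \<bullet> (w' - w)"
    by (simp add: algebra_simps)
  also have "\<dots> = 0" using orth w' \<open>w' - w \<in> S\<close> by auto
  finally show "w' = w" by simp
qed

lemma orth_proj_in_orthogonal:
  fixes S :: "'a::euclidean_space set"
  assumes S: "subspace S"
  shows "orth_proj S v \<in> S" "\<forall>s\<in>S. (v - orth_proj S v) \<bullet> s = 0"
proof -
  obtain y z where yz: "y \<in> span S" "\<And>w. w \<in> span S \<Longrightarrow> orthogonal z w" "v = y + z"
    by (rule orthogonal_subspace_decomp_exists[of S v]) blast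
  have y: "y \<in> S" using yz(1) S by (metis span_eq_iff)
  have orth: "\<forall>s\<in>S. (v - y) \<bullet> s = 0" using yz(2,3) by (auto simp: orthogonal_def span_base)
  show "orth_proj S v \<in> S" "\<forall>s\<in>S. (v - orth_proj S v) \<bullet> s = 0"
    using orth_proj_eqI[OF S y orth] y orth by auto
qed

lemma orth_proj_id: "subspace S \<Longrightarrow> s \<in> S \<Longrightarrow> orth_proj S s = s"
  by (rule orth_proj_eqI) auto

lemma linear_orth_proj:
  fixes S :: "'a::euclidean_space set"
  assumes S: "subspace S"
  shows "linear (orth_proj S)"
proof (rule linearI)
  note P = orth_proj_in_orthogonal[OF S]
  show "orth_proj S (x + y) = orth_proj S x + orth_proj S y" for x y
    using P[of x] P[of y]
    by (intro orth_proj_eqI S subspace_add) (auto simp: algebra_simps inner_diff_left inner_add_left)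
  show "orth_proj S (c *\<^sub>R x) = c *\<^sub>R orth_proj S x" for c x
    using P[of x]
    by (intro orth_proj_eqI S subspace_scale) (auto simp: inner_diff_left simp flip: scaleR_diff_right)
qed

lemma inner_diff_orth_proj:
  fixes S :: "'a::euclidean_space set"
  assumes S: "subspace S"
  shows "v \<bullet> w - orth_proj S v \<bullet> w = (v - orth_proj S v) \<bullet> (w - orth_proj S w)"
  using orth_proj_in_orthogonal[OF S, of v] orth_proj_in_orthogonal(1)[OF S, of w]
  by (simp add: inner_diff_left inner_diff_right)

lemma linear_euclidean_expansion:
  fixes L :: "'a::euclidean_space \<Rightarrow> 'b::real_vector"
  assumes "linear L"
  shows "L v = (\<Sum>b\<in>Basis. (v \<bullet> b) *\<^sub>R L b)"
proof -
  have "L v = L (\<Sum>b\<in>Basis. (v \<bullet> b) *\<^sub>R b)" by (simp add: euclidean_representation)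
  thus ?thesis by (simp add: linear_sum[OF assms] linear_scale[OF assms])
qed

text \<open>In a slice chart the tangent spaces are \<open>{v. \<phi>' q v \<in> E}\<close>; differentiating
\<open>\<phi>' (\<gamma> h) (V h) \<in> E\<close> shows that the derivative \<open>V'\<close> of a tangent field along a curve is determined
modulo the tangent space by \<open>\<gamma>'(0)\<close> and \<open>V(0)\<close> alone.\<close>

lemma slice_chart_derivative_of_tangent_field:
  fixes M :: "'a::euclidean_space set" and \<phi> :: "'a \<Rightarrow> 'a"
  assumes U: "open U" "p \<in> U" and E: "subspace E"
    and \<phi>': "\<And>x. x \<in> U \<Longrightarrow> (\<phi> has_derivative \<phi>' x) (at x)"
    and \<phi>'': "\<And>x v. x \<in> U \<Longrightarrow> ((\<lambda>y. \<phi>' y v) has_derivative \<phi>'' v x) (at x)"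
    and tangent: "\<And>q. q \<in> M \<Longrightarrow> q \<in> U \<Longrightarrow> tangent_space M q = {v. \<phi>' q v \<in> E}"
    and \<gamma>: "\<gamma> 0 = p" "(\<gamma> has_vector_derivative X) (at 0)"
    and V: "\<forall>\<^sub>F t in nhds 0. \<gamma> t \<in> M \<and> V t \<in> tangent_space M (\<gamma> t)"
      "V 0 = Y" "(V has_vector_derivative V') (at 0)"
  shows "\<phi>' p V' + (\<Sum>b\<in>Basis. (Y \<bullet> b) *\<^sub>R \<phi>'' b p X) \<in> E"
proof -
  define c where "c h = (\<Sum>b\<in>Basis. (V h \<bullet> b) *\<^sub>R \<phi>' (\<gamma> h) b)" for h
  have lin: "linear (\<phi>' q)" if "q \<in> U" for q using \<phi>'[OF that] has_derivative_linear by blast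
  have "\<forall>\<^sub>F t in nhds 0. \<gamma> t \<in> U"
    using U \<gamma>(1) has_vector_derivative_continuous[OF \<gamma>(2)]
    by (intro isCont_eventually_in_open) auto
  with V(1) have "\<forall>\<^sub>F h in nhds 0. c h \<in> E"
  proof eventually_elim
    case (elim h)
    hence "\<phi>' (\<gamma> h) (V h) \<in> E" using tangent by auto
    thus ?case using linear_euclidean_expansion[OF lin, of "\<gamma> h" "V h"] elim by (simp add: c_def)
  qed
  moreover have "(c has_vector_derivative
      (\<Sum>b\<in>Basis. (V 0 \<bullet> b) *\<^sub>R \<phi>'' b p X + (V' \<bullet> b) *\<^sub>R \<phi>' (\<gamma> 0) b)) (at 0)"
    unfolding c_def
  proof (rule has_vector_derivative_sum)
    fix b :: 'a
    have "((\<lambda>h. V h \<bullet> b) has_real_derivative V' \<bullet> b) (at 0)"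
      using bounded_linear.has_vector_derivative[OF bounded_linear_inner_left V(3)]
      by (simp add: has_real_derivative_iff_has_vector_derivative)
    moreover have "((\<lambda>h. \<phi>' (\<gamma> h) b) has_vector_derivative \<phi>'' b p X) (at 0)"
      using has_vector_derivative_compose[OF \<gamma>(2), of "\<lambda>y. \<phi>' y b"] \<phi>''[OF U(2), of b] \<gamma>(1)
      by simp
    ultimately show "((\<lambda>h. (V h \<bullet> b) *\<^sub>R \<phi>' (\<gamma> h) b) has_vector_derivative
        (V 0 \<bullet> b) *\<^sub>R \<phi>'' b p X + (V' \<bullet> b) *\<^sub>R \<phi>' (\<gamma> 0) b) (at 0)"
      by (rule has_vector_derivative_scaleR)
  qed
  moreover have "(\<Sum>b\<in>Basis. (V 0 \<bullet> b) *\<^sub>R \<phi>'' b p X + (V' \<bullet> b) *\<^sub>R \<phi>' (\<gamma> 0) b)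
      = \<phi>' p V' + (\<Sum>b\<in>Basis. (Y \<bullet> b) *\<^sub>R \<phi>'' b p X)"
    using linear_euclidean_expansion[OF lin[OF U(2)], of V'] V(2) \<gamma>(1) by (simp add: sum.distrib)
  ultimately show ?thesis using has_vector_derivative_in_subspace[OF E] by metis
qed

locale submanifold =
  fixes M :: "'a::euclidean_space set" and n :: nat
  assumes smooth: "smooth_submanifold M n"
begin

lemma subspace_tangent_space: "p \<in> M \<Longrightarrow> subspace (tangent_space M p)"
  using tangent_space_subspace[OF smooth] .

lemma tproj_orthogonal: "p \<in> M \<Longrightarrow> s \<in> tangent_space M p \<Longrightarrow> s \<bullet> (v - tproj M p v) = 0"
  unfolding tproj_def using orth_proj_in_orthogonal(2)[OF subspace_tangent_space]
  by (simp add: inner_commute)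

lemma tproj_id: "p \<in> M \<Longrightarrow> s \<in> tangent_space M p \<Longrightarrow> tproj M p s = s"
  unfolding tproj_def by (rule orth_proj_id[OF subspace_tangent_space])

lemma linear_tproj: "p \<in> M \<Longrightarrow> linear (tproj M p)"
  unfolding tproj_def[abs_def] by (rule linear_orth_proj[OF subspace_tangent_space])

lemma inner_diff_tproj:
  "p \<in> M \<Longrightarrow> v \<bullet> w - tproj M p v \<bullet> w = (v - tproj M p v) \<bullet> (w - tproj M p w)"
  unfolding tproj_def by (rule inner_diff_orth_proj[OF subspace_tangent_space])

lemma sff_eq_normal_derivative:
  assumes \<gamma>: "\<gamma> 0 = p" "(\<gamma> has_vector_derivative X) (at 0)"
    and V: "\<forall>\<^sub>F t in nhds 0. \<gamma> t \<in> M \<and> V t \<in> tangent_space M (\<gamma> t)"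
      "V 0 = Y" "(V has_vector_derivative V') (at 0)"
  shows "sff M p X Y = V' - tproj M p V'"
proof -
  have p: "p \<in> M" using eventually_nhds_x_imp_x[OF V(1)] \<gamma>(1) by simp
  define P where "P w \<longleftrightarrow> (\<exists>(\<gamma>::real \<Rightarrow> 'a) V V'.
      \<gamma> 0 = p \<and> (\<gamma> has_vector_derivative X) (at 0) \<and>
      (\<forall>\<^sub>F t in nhds 0. \<gamma> t \<in> M \<and> V t \<in> tangent_space M (\<gamma> t)) \<and>
      V 0 = Y \<and> (V has_vector_derivative V') (at 0) \<and> w = V' - tproj M p V')" for w
  have "P (V' - tproj M p V')" unfolding P_def using assms by blast
  hence "P (sff M p X Y)" unfolding sff_def P_def[symmetric] by (rule someI)
  then obtain \<gamma>2 V2 V2' where w2: "\<gamma>2 0 = p" "(\<gamma>2 has_vector_derivative X) (at 0)"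
      "\<forall>\<^sub>F t in nhds 0. \<gamma>2 t \<in> M \<and> V2 t \<in> tangent_space M (\<gamma>2 t)"
      "V2 0 = Y" "(V2 has_vector_derivative V2') (at 0)" "sff M p X Y = V2' - tproj M p V2'"
    unfolding P_def by blast
  show ?thesis
  proof (rule submanifold_chart[OF smooth p])
    fix U E and \<phi> :: "'a \<Rightarrow> 'a" and \<phi>' \<phi>''
    assume chart: "open U" "p \<in> U" "subspace E"
      "\<And>x. x \<in> U \<Longrightarrow> (\<phi> has_derivative \<phi>' x) (at x)"
      "\<And>x v. x \<in> U \<Longrightarrow> ((\<lambda>y. \<phi>' y v) has_derivative \<phi>'' v x) (at x)"
      "\<And>q. q \<in> M \<Longrightarrow> q \<in> U \<Longrightarrow> tangent_space M q = {v. \<phi>' q v \<in> E}"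
    have lin: "linear (\<phi>' p)" using chart(2,4) has_derivative_linear by blast
    have "\<phi>' p (V' - V2') \<in> E"
      using subspace_diff[OF chart(3) slice_chart_derivative_of_tangent_field[OF chart \<gamma> V]
          slice_chart_derivative_of_tangent_field[OF chart w2(1-5)]]
      by (simp add: linear_diff[OF lin])
    hence "tproj M p (V' - V2') = V' - V2'" using chart(2,6) p by (simp add: tproj_id)
    hence "V' - tproj M p V' = V2' - tproj M p V2'"
      by (simp add: linear_diff[OF linear_tproj[OF p]] algebra_simps)
    thus "sff M p X Y = V' - tproj M p V'" using w2(6) by simp
  qed
qed

end

subsection \<open>The regularized flow\<close>

locale regularized_flow = submanifold M n for M :: "'n::euclidean_space set" and n :: nat +
  fixes \<Omega> :: "'m::euclidean_space set" and u :: "real \<Rightarrow> 'm \<Rightarrow> 'n" and a T \<epsilon> :: real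
  assumes open_domain: "open \<Omega>" and eps_pos: "\<epsilon> > 0"
    and regular: "parabolic_holder_3a_loc a \<Omega> T u"
    and values_in_M: "\<forall>t\<in>{0..<T}. \<forall>x\<in>closure \<Omega>. u t x \<in> M"
    and flow_equation: "\<forall>t\<in>{0<..<T}. \<forall>x\<in>\<Omega>.
       pdt u t x = tproj M (u t x)
         (\<Sum>i\<in>Basis. pdx i (\<lambda>s y. (1 / sqrt (\<epsilon> ^ 2 + (\<Sum>k\<in>Basis. norm (pdx k u s y) ^ 2))) *\<^sub>R pdx i u s y) t x)"
begin

lemma has_dir_deriv_on_pD:
  assumes "e \<in> Basis" "set ds \<subseteq> Basis" "2 * r + length ds \<le> 2" "t \<in> {0<..<T}"
  shows "has_dir_deriv_on \<Omega> e (pD ds r u t) (pD (e # ds) r u t)"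
proof -
  have "admissible (e # ds) r" using assms(1-3) unfolding admissible_def by auto
  thus ?thesis
    using conjunct1[OF conjunct2[OF regular[unfolded parabolic_holder_3a_loc_def]]] assms(4)
    unfolding has_dir_deriv_on_def by blast
qed

lemma has_vector_derivative_pD_time:
  assumes "2 * Suc r \<le> 3" "t \<in> {0<..<T}" "y \<in> \<Omega>"
  shows "((\<lambda>s. pD [] r u s y) has_vector_derivative pD [] (Suc r) u t y) (at t)"
proof -
  have "admissible [] (Suc r)" using assms(1) unfolding admissible_def by auto
  thus ?thesis
    using conjunct1[OF conjunct2[OF conjunct2[OF regular[unfolded parabolic_holder_3a_loc_def]]]]
      assms(2,3) by blast
qed

lemma continuous_on_pD:
  assumes "set ds \<subseteq> Basis" "2 * r + length ds \<le> 3"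
  shows "continuous_on ({0<..<T} \<times> \<Omega>) (\<lambda>(t, y). pD ds r u t y)"
proof -
  obtain g where g: "continuous_on ({0..<T} \<times> closure \<Omega>) g"
    "\<forall>t\<in>{0<..<T}. \<forall>x\<in>\<Omega>. g (t, x) = pD ds r u t x"
    using conjunct1[OF conjunct2[OF conjunct2[OF conjunct2[OF regular[unfolded parabolic_holder_3a_loc_def]]]]]
      assms unfolding admissible_def by blast
  have "continuous_on ({0<..<T} \<times> \<Omega>) g"
    by (rule continuous_on_subset[OF g(1)]) (auto intro: closure_subset[THEN subsetD])
  thus ?thesis by (rule continuous_on_eq) (use g(2) in auto)
qed

lemma isCont_pD:
  assumes "set ds \<subseteq> Basis" "2 * r + length ds \<le> 3" "t \<in> {0<..<T}" "y \<in> \<Omega>"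
  shows "isCont (\<lambda>(t, y). pD ds r u t y) (t, y)" "isCont (pD ds r u t) y"
proof -
  have "open ({0<..<T} \<times> \<Omega>)" using open_domain by (intro open_Times) auto
  thus cont: "isCont (\<lambda>(t, y). pD ds r u t y) (t, y)"
    using continuous_on_pD[OF assms(1,2)] assms(3,4) continuous_on_eq_continuous_at by blast
  show "isCont (pD ds r u t) y"
    using continuous_at_compose[of y "\<lambda>y. (t, y)", OF _ cont] by (simp add: o_def)
qed

lemma pD_swap:
  assumes "t \<in> {0<..<T}" "y \<in> \<Omega>" "e \<in> Basis" "e' \<in> Basis" "set ds \<subseteq> Basis" "length ds \<le> 1"
  shows "pD (e # e' # ds) 0 u t y = pD (e' # e # ds) 0 u t y"
proof -
  have "((\<lambda>h. pD (e' # ds) 0 u t (y + h *\<^sub>R e)) has_vector_derivative pD (e' # e # ds) 0 u t y) (at 0)"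
    using assms by (intro has_dir_deriv_on_mixed_partial[OF open_domain assms(2)
        has_dir_deriv_on_pD[of e ds 0 t] has_dir_deriv_on_pD[of e' ds 0 t]
        has_dir_deriv_on_pD[of e' "e # ds" 0 t] isCont_pD(2)[of "e' # e # ds" 0 t y]]) auto
  moreover have "((\<lambda>h. pD (e' # ds) 0 u t (y + h *\<^sub>R e)) has_vector_derivative pD (e # e' # ds) 0 u t y) (at 0)"
    using assms by (intro has_dir_deriv_onD[OF has_dir_deriv_on_pD]) auto
  ultimately show ?thesis using vector_derivative_unique_at by metis
qed

text \<open>Time is treated as one more direction, \<open>(1, 0)\<close>, in the product space \<open>{0<..<T} \<times> \<Omega>\<close>.\<close>

lemma has_vector_derivative_pdx_time:
  assumes t: "t \<in> {0<..<T}" and x: "x \<in> \<Omega>" and k: "k \<in> Basis"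
  shows "((\<lambda>s. pdx k u s x) has_vector_derivative pdx k (pdt u) t x) (at t)"
proof -
  define S where "S = {0<..<T} \<times> \<Omega>"
  have S: "open S" "(t, x) \<in> S" using open_domain t x by (auto simp: S_def intro: open_Times)
  have time: "has_dir_deriv_on S (1, 0) (\<lambda>(s, y). u s y) (\<lambda>(s, y). pdt u s y)"
    unfolding has_dir_deriv_on_def
  proof
    fix z assume "z \<in> S"
    then obtain s y where z: "z = (s, y)" "s \<in> {0<..<T}" "y \<in> \<Omega>" by (auto simp: S_def)
    hence "((\<lambda>s'. u s' y) has_vector_derivative pdt u s y) (at s)"
      using has_vector_derivative_pD_time[of 0 s y] by simp
    hence "((\<lambda>h. u (s + h) y) has_vector_derivative pdt u s y) (at 0)"
      using has_vector_derivative_at_0_iff_shift[of "\<lambda>s'. u s' y" s] by simp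
    thus "((\<lambda>h. (\<lambda>(s, y). u s y) (z + h *\<^sub>R (1, 0))) has_vector_derivative
        (\<lambda>(s, y). pdt u s y) z) (at 0)"
      by (simp add: z)
  qed
  have space: "has_dir_deriv_on S (0, k) (\<lambda>(s, y). g s y) (\<lambda>(s, y). g' s y)"
    if "\<And>s. s \<in> {0<..<T} \<Longrightarrow> has_dir_deriv_on \<Omega> k (g s) (g' s)" for g g'
    unfolding has_dir_deriv_on_def
  proof
    fix z assume "z \<in> S"
    then obtain s y where z: "z = (s, y)" "s \<in> {0<..<T}" "y \<in> \<Omega>" by (auto simp: S_def)
    thus "((\<lambda>h. (\<lambda>(s, y). g s y) (z + h *\<^sub>R (0, k))) has_vector_derivative
        (\<lambda>(s, y). g' s y) z) (at 0)"
      using has_dir_deriv_onD[OF that] by simp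
  qed
  have "has_dir_deriv_on S (0, k) (\<lambda>(s, y). u s y) (\<lambda>(s, y). pdx k u s y)"
    by (rule space) (use has_dir_deriv_on_pD[of k "[]" 0] k in simp)
  moreover have "has_dir_deriv_on S (0, k) (\<lambda>(s, y). pdt u s y) (\<lambda>(s, y). pD [k] 1 u s y)"
    by (rule space) (use has_dir_deriv_on_pD[of k "[]" 1] k in \<open>simp add: One_nat_def\<close>)
  moreover have "isCont (\<lambda>(s, y). pD [k] 1 u s y) (t, x)"
    using isCont_pD(1)[of "[k]" 1 t x] k t x by simp
  ultimately have "((\<lambda>h. (\<lambda>(s, y). pdx k u s y) ((t, x) + h *\<^sub>R (1, 0))) has_vector_derivative
      (\<lambda>(s, y). pD [k] 1 u s y) (t, x)) (at 0)"
    by (rule has_dir_deriv_on_mixed_partial[OF S time])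
  thus ?thesis using has_vector_derivative_at_0_iff_shift[of "\<lambda>s. pdx k u s x" t]
    by (simp add: One_nat_def)
qed

definition weight :: "real \<Rightarrow> real" where
  "weight s = 1 / sqrt (\<epsilon>\<^sup>2 + s)"

definition weight' :: "real \<Rightarrow> real" where
  "weight' s = - 1 / (2 * (\<epsilon>\<^sup>2 + s) * sqrt (\<epsilon>\<^sup>2 + s))"

definition weight'' :: "real \<Rightarrow> real" where
  "weight'' s = 3 / (4 * (\<epsilon>\<^sup>2 + s)\<^sup>2 * sqrt (\<epsilon>\<^sup>2 + s))"

lemma has_real_derivative_weight: "s \<ge> 0 \<Longrightarrow> (weight has_real_derivative weight' s) (at s)"
proof -
  assume "s \<ge> 0"
  hence pos: "\<epsilon>\<^sup>2 + s > 0" using eps_pos by (simp add: add_pos_nonneg)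
  have "((\<lambda>s. 1 / sqrt (\<epsilon>\<^sup>2 + s)) has_real_derivative
      - (1 * (inverse (sqrt (\<epsilon>\<^sup>2 + s)) / 2 * (0 + 1))) / (sqrt (\<epsilon>\<^sup>2 + s) * sqrt (\<epsilon>\<^sup>2 + s))) (at s)"
    using pos by (auto intro!: derivative_eq_intros)
  moreover have "- (1 * (inverse (sqrt (\<epsilon>\<^sup>2 + s)) / 2 * (0 + 1))) / (sqrt (\<epsilon>\<^sup>2 + s) * sqrt (\<epsilon>\<^sup>2 + s))
      = weight' s"
    using pos by (simp add: weight'_def field_simps)
  ultimately show ?thesis by (simp add: weight_def[abs_def])
qed

lemma has_real_derivative_weight': "s \<ge> 0 \<Longrightarrow> (weight' has_real_derivative weight'' s) (at s)"
proof -
  assume "s \<ge> 0"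
  hence pos: "\<epsilon>\<^sup>2 + s > 0" using eps_pos by (simp add: add_pos_nonneg)
  have "- ((- (2 * sqrt (w + s)) - inverse (sqrt (w + s)) * (2 * w + 2 * s) / 2) /
        ((2 * w + 2 * s) * sqrt (w + s) * ((2 * w + 2 * s) * sqrt (w + s))))
      = 3 / (4 * (w + s)\<^sup>2 * sqrt (w + s))" if "w + s > 0" for w
  proof -
    define r where "r = sqrt (w + s)"
    have r: "r > 0" "w + s = r * r" using that by (auto simp: r_def)
    have "2 * w + 2 * s = 2 * (r * r)" using r by simp
    thus ?thesis unfolding r_def[symmetric] r(2) using r(1) by (simp add: field_simps power2_eq_square)
  qed
  thus ?thesis
    unfolding weight'_def[abs_def] using pos
    by (auto intro!: derivative_eq_intros simp: weight''_def)
qed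

definition grad_sq :: "real \<Rightarrow> 'm \<Rightarrow> real" where
  "grad_sq t y = (\<Sum>k\<in>Basis. norm (pdx k u t y) ^ 2)"

definition grad_sq_dx :: "real \<Rightarrow> 'm \<Rightarrow> 'm \<Rightarrow> real" where
  "grad_sq_dx t e y = (\<Sum>k\<in>Basis. 2 * (pdx k u t y \<bullet> pdx e (pdx k u) t y))"

definition grad_sq_dxx :: "real \<Rightarrow> 'm \<Rightarrow> 'm \<Rightarrow> 'm \<Rightarrow> real" where
  "grad_sq_dxx t e' e y = (\<Sum>k\<in>Basis. 2 * (pdx k u t y \<bullet> pdx e' (pdx e (pdx k u)) t y
                                         + pdx e' (pdx k u) t y \<bullet> pdx e (pdx k u) t y))"

definition coef :: "real \<Rightarrow> 'm \<Rightarrow> real" where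
  "coef t y = weight (grad_sq t y)"

definition coef_dx :: "real \<Rightarrow> 'm \<Rightarrow> 'm \<Rightarrow> real" where
  "coef_dx t e y = grad_sq_dx t e y * weight' (grad_sq t y)"

definition coef_dxx :: "real \<Rightarrow> 'm \<Rightarrow> 'm \<Rightarrow> 'm \<Rightarrow> real" where
  "coef_dxx t e' e y = grad_sq_dx t e y * (grad_sq_dx t e' y * weight'' (grad_sq t y))
                       + grad_sq_dxx t e' e y * weight' (grad_sq t y)"

definition Z :: "real \<Rightarrow> 'm \<Rightarrow> 'm \<Rightarrow> 'n" where
  "Z t i y = coef t y *\<^sub>R pdx i u t y"

definition Z_dx :: "real \<Rightarrow> 'm \<Rightarrow> 'm \<Rightarrow> 'm \<Rightarrow> 'n" where
  "Z_dx t e i y = coef t y *\<^sub>R pdx e (pdx i u) t y + coef_dx t e y *\<^sub>R pdx i u t y"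

definition Z_dxx :: "real \<Rightarrow> 'm \<Rightarrow> 'm \<Rightarrow> 'm \<Rightarrow> 'm \<Rightarrow> 'n" where
  "Z_dxx t e' e i y = (coef t y *\<^sub>R pdx e' (pdx e (pdx i u)) t y + coef_dx t e' y *\<^sub>R pdx e (pdx i u) t y)
                     + (coef_dx t e y *\<^sub>R pdx e' (pdx i u) t y + coef_dxx t e' e y *\<^sub>R pdx i u t y)"

lemma Z_explicit:
  "(1 / sqrt (\<epsilon> ^ 2 + (\<Sum>k\<in>Basis. norm (pdx k u t y) ^ 2))) *\<^sub>R pdx i u t y = Z t i y"
  by (simp add: Z_def coef_def weight_def grad_sq_def)

context
  fixes t assumes t: "t \<in> {0<..<T}"
begin

lemma has_dir_deriv_on_u: "e \<in> Basis \<Longrightarrow> has_dir_deriv_on \<Omega> e (u t) (pdx e u t)"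
  using has_dir_deriv_on_pD[of e "[]" 0 t] t by simp

lemma has_dir_deriv_on_pdx:
  "e \<in> Basis \<Longrightarrow> k \<in> Basis \<Longrightarrow> has_dir_deriv_on \<Omega> e (pdx k u t) (pdx e (pdx k u) t)"
  using has_dir_deriv_on_pD[of e "[k]" 0 t] t by simp

lemma has_dir_deriv_on_pdx_pdx:
  "e' \<in> Basis \<Longrightarrow> e \<in> Basis \<Longrightarrow> k \<in> Basis \<Longrightarrow>
   has_dir_deriv_on \<Omega> e' (pdx e (pdx k u) t) (pdx e' (pdx e (pdx k u)) t)"
  using has_dir_deriv_on_pD[of e' "[e, k]" 0 t] t by simp

lemma has_dir_deriv_on_pdx_pdt:
  "k \<in> Basis \<Longrightarrow> has_dir_deriv_on \<Omega> k (pdt u t) (pdx k (pdt u) t)"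
  using has_dir_deriv_on_pD[of k "[]" 1 t] t by (simp add: One_nat_def)

lemma pdx_pdx_commute:
  "e \<in> Basis \<Longrightarrow> e' \<in> Basis \<Longrightarrow> y \<in> \<Omega> \<Longrightarrow> pdx e (pdx e' u) t y = pdx e' (pdx e u) t y"
  using pD_swap[OF t, of y e e' "[]"] by simp

lemma pdx_pdx_pdx_commute:
  "e \<in> Basis \<Longrightarrow> e' \<in> Basis \<Longrightarrow> k \<in> Basis \<Longrightarrow> y \<in> \<Omega> \<Longrightarrow>
   pdx e (pdx e' (pdx k u)) t y = pdx e' (pdx e (pdx k u)) t y"
  using pD_swap[OF t, of y e e' "[k]"] by simp

lemma grad_sq_nonneg: "grad_sq t y \<ge> 0"
  unfolding grad_sq_def by (intro sum_nonneg) auto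

lemma has_dir_deriv_on_grad_sq: "e \<in> Basis \<Longrightarrow> has_dir_deriv_on \<Omega> e (grad_sq t) (grad_sq_dx t e)"
  unfolding grad_sq_def[abs_def] grad_sq_dx_def[abs_def]
  by (intro has_dir_deriv_on_sum has_dir_deriv_on_norm_power2 has_dir_deriv_on_pdx)

lemma has_dir_deriv_on_grad_sq_dx:
  "e \<in> Basis \<Longrightarrow> e' \<in> Basis \<Longrightarrow> has_dir_deriv_on \<Omega> e' (grad_sq_dx t e) (grad_sq_dxx t e' e)"
  unfolding grad_sq_dx_def[abs_def] grad_sq_dxx_def[abs_def]
  by (intro has_dir_deriv_on_sum has_dir_deriv_on_mult_left has_dir_deriv_on_inner
      has_dir_deriv_on_pdx has_dir_deriv_on_pdx_pdx)

lemma has_dir_deriv_on_coef: "e \<in> Basis \<Longrightarrow> has_dir_deriv_on \<Omega> e (coef t) (coef_dx t e)"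
  unfolding coef_def[abs_def] coef_dx_def[abs_def]
  by (intro has_dir_deriv_on_compose has_dir_deriv_on_grad_sq has_real_derivative_weight)
     (auto intro: grad_sq_nonneg)

lemma has_dir_deriv_on_coef_dx:
  assumes "e \<in> Basis" "e' \<in> Basis"
  shows "has_dir_deriv_on \<Omega> e' (coef_dx t e) (coef_dxx t e' e)"
proof -
  have "has_dir_deriv_on \<Omega> e' (\<lambda>y. weight' (grad_sq t y)) (\<lambda>y. grad_sq_dx t e' y * weight'' (grad_sq t y))"
    by (intro has_dir_deriv_on_compose has_dir_deriv_on_grad_sq has_real_derivative_weight' assms)
       (auto intro: grad_sq_nonneg)
  from has_dir_deriv_on_mult[OF has_dir_deriv_on_grad_sq_dx[OF assms] this] show ?thesis
    unfolding coef_dx_def[abs_def] coef_dxx_def[abs_def] by simp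
qed

lemma has_dir_deriv_on_Z: "e \<in> Basis \<Longrightarrow> i \<in> Basis \<Longrightarrow> has_dir_deriv_on \<Omega> e (Z t i) (Z_dx t e i)"
  unfolding Z_def[abs_def] Z_dx_def[abs_def]
  by (intro has_dir_deriv_on_scaleR has_dir_deriv_on_coef has_dir_deriv_on_pdx)

lemma has_dir_deriv_on_Z_dx:
  "e \<in> Basis \<Longrightarrow> e' \<in> Basis \<Longrightarrow> i \<in> Basis \<Longrightarrow> has_dir_deriv_on \<Omega> e' (Z_dx t e i) (Z_dxx t e' e i)"
  unfolding Z_dx_def[abs_def] Z_dxx_def[abs_def]
  by (intro has_dir_deriv_on_add has_dir_deriv_on_scaleR has_dir_deriv_on_coef
      has_dir_deriv_on_coef_dx has_dir_deriv_on_pdx has_dir_deriv_on_pdx_pdx)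

lemma pdx_Z_explicit:
  assumes "y \<in> \<Omega>" "e \<in> Basis" "i \<in> Basis"
  shows "pdx e (\<lambda>s y. (1 / sqrt (\<epsilon> ^ 2 + (\<Sum>k\<in>Basis. norm (pdx k u s y) ^ 2))) *\<^sub>R pdx i u s y) t y
    = Z_dx t e i y"
  using pdx_eqI[OF _ assms(1)] has_dir_deriv_on_Z[OF assms(2,3)] by (simp add: Z_explicit)

lemma Z_dxx_commute:
  assumes "e \<in> Basis" "i \<in> Basis" "y \<in> \<Omega>"
  shows "Z_dxx t e i i y = Z_dxx t i e i y"
proof -
  have "grad_sq_dxx t e i y = grad_sq_dxx t i e y"
    unfolding grad_sq_dxx_def using assms
    by (intro sum.cong refl) (simp add: pdx_pdx_pdx_commute inner_commute)
  hence "coef_dxx t e i y = coef_dxx t i e y" unfolding coef_dxx_def by (simp add: mult_ac)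
  thus ?thesis unfolding Z_dxx_def using pdx_pdx_pdx_commute[OF assms(1,2,2,3)] by (simp add: add_ac)
qed

end

definition div_Z :: "real \<Rightarrow> 'm \<Rightarrow> 'n" where
  "div_Z t y = (\<Sum>i\<in>Basis. Z_dx t i i y)"

context
  fixes t assumes t: "t \<in> {0<..<T}"
begin

lemma u_in_M: "y \<in> \<Omega> \<Longrightarrow> u t y \<in> M"
  using values_in_M t closure_subset by fastforce

lemma pdx_in_tangent_space:
  assumes "k \<in> Basis" "y \<in> \<Omega>"
  shows "pdx k u t y \<in> tangent_space M (u t y)"
  unfolding tangent_space_def
proof (intro CollectI exI conjI)
  show "((\<lambda>h. u t (y + h *\<^sub>R k)) has_vector_derivative pdx k u t y) (at 0)"
    using has_dir_deriv_onD[OF has_dir_deriv_on_u[OF t assms(1)] assms(2)] .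
  have "\<forall>\<^sub>F h in nhds 0. y + h *\<^sub>R k \<in> \<Omega>"
    using open_domain assms(2) by (intro isCont_eventually_in_open) (auto intro!: continuous_intros)
  thus "\<forall>\<^sub>F h in nhds 0. u t (y + h *\<^sub>R k) \<in> M" by eventually_elim (rule u_in_M)
qed simp

lemma Z_in_tangent_space: "i \<in> Basis \<Longrightarrow> y \<in> \<Omega> \<Longrightarrow> Z t i y \<in> tangent_space M (u t y)"
  unfolding Z_def
  by (intro subspace_scale[OF subspace_tangent_space[OF u_in_M]] pdx_in_tangent_space)

lemma sff_pdx:
  assumes e: "e \<in> Basis" and x: "x \<in> \<Omega>"
    and tangent: "\<And>y. y \<in> \<Omega> \<Longrightarrow> V y \<in> tangent_space M (u t y)"
    and V': "has_dir_deriv_on \<Omega> e V V'"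
  shows "sff M (u t x) (pdx e u t x) (V x) = V' x - tproj M (u t x) (V' x)"
proof (rule sff_eq_normal_derivative)
  show "((\<lambda>h. u t (x + h *\<^sub>R e)) has_vector_derivative pdx e u t x) (at 0)"
    using has_dir_deriv_onD[OF has_dir_deriv_on_u[OF t e] x] .
  have "\<forall>\<^sub>F h in nhds 0. x + h *\<^sub>R e \<in> \<Omega>"
    using open_domain x by (intro isCont_eventually_in_open) (auto intro!: continuous_intros)
  thus "\<forall>\<^sub>F h in nhds 0. u t (x + h *\<^sub>R e) \<in> M \<and> V (x + h *\<^sub>R e) \<in> tangent_space M (u t (x + h *\<^sub>R e))"
    by eventually_elim (use u_in_M tangent in auto)
  show "((\<lambda>h. V (x + h *\<^sub>R e)) has_vector_derivative V' x) (at 0)"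
    using has_dir_deriv_onD[OF V' x] .
qed simp_all

lemma pdt_grad_sq:
  assumes x: "x \<in> \<Omega>"
  shows "pdt (\<lambda>s y. \<Sum>k\<in>Basis. norm (pdx k u s y) ^ 2) t x
       = (\<Sum>k\<in>Basis. 2 * (pdx k u t x \<bullet> pdx k (pdt u) t x))"
proof -
  have "((\<lambda>s. \<Sum>k\<in>Basis. norm (pdx k u s x) ^ 2) has_vector_derivative
      (\<Sum>k\<in>Basis. 2 * (pdx k u t x \<bullet> pdx k (pdt u) t x))) (at t)"
  proof (rule has_vector_derivative_sum)
    fix k :: 'm assume "k \<in> Basis"
    from has_vector_derivative_pdx_time[OF t x this]
    show "((\<lambda>s. norm (pdx k u s x) ^ 2) has_vector_derivative 2 * (pdx k u t x \<bullet> pdx k (pdt u) t x)) (at t)"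
      using bounded_bilinear.has_vector_derivative[OF bounded_bilinear_inner]
      by (fastforce simp: power2_norm_eq_inner inner_commute)
  qed
  thus ?thesis unfolding pdt_def by (rule vector_derivative_at)
qed

lemma pdt_eq_tproj_div_Z: "y \<in> \<Omega> \<Longrightarrow> pdt u t y = tproj M (u t y) (div_Z t y)"
  using flow_equation t by (simp add: div_Z_def pdx_Z_explicit[OF t])

lemma pdx_inner_pdx_pdt:
  assumes k: "k \<in> Basis" and x: "x \<in> \<Omega>"
  shows "pdx k u t x \<bullet> pdx k (pdt u) t x
    = pdx k u t x \<bullet> (\<Sum>i\<in>Basis. Z_dxx t k i i x)
      + (pdx k (pdx k u) t x - tproj M (u t x) (pdx k (pdx k u) t x))
        \<bullet> (div_Z t x - tproj M (u t x) (div_Z t x))"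
proof -
  define Q where "Q y = div_Z t y - pdt u t y" for y
  have "has_dir_deriv_on \<Omega> k Q (\<lambda>y. (\<Sum>i\<in>Basis. Z_dxx t k i i y) - pdx k (pdt u) t y)"
    unfolding Q_def[abs_def] div_Z_def[abs_def]
    by (intro has_dir_deriv_on_diff has_dir_deriv_on_sum has_dir_deriv_on_Z_dx has_dir_deriv_on_pdx_pdt
        t k) auto
  hence "has_dir_deriv_on \<Omega> k (\<lambda>y. pdx k u t y \<bullet> Q y)
     (\<lambda>y. pdx k u t y \<bullet> ((\<Sum>i\<in>Basis. Z_dxx t k i i y) - pdx k (pdt u) t y) + pdx k (pdx k u) t y \<bullet> Q y)"
    by (intro has_dir_deriv_on_inner has_dir_deriv_on_pdx t k)
  moreover have "pdx k u t y \<bullet> Q y = 0" if "y \<in> \<Omega>" for y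
    unfolding Q_def pdt_eq_tproj_div_Z[OF that]
    by (rule tproj_orthogonal[OF u_in_M[OF that] pdx_in_tangent_space[OF k that]])
  ultimately have "pdx k u t x \<bullet> ((\<Sum>i\<in>Basis. Z_dxx t k i i x) - pdx k (pdt u) t x)
      + pdx k (pdx k u) t x \<bullet> Q x = 0"
    by (rule has_dir_deriv_on_eq_0[OF open_domain _ _ x])
  moreover have "pdx k (pdx k u) t x \<bullet> Q x
      = (pdx k (pdx k u) t x - tproj M (u t x) (pdx k (pdx k u) t x))
        \<bullet> (div_Z t x - tproj M (u t x) (div_Z t x))"
    using inner_diff_tproj[OF u_in_M[OF x], of "div_Z t x" "pdx k (pdx k u) t x"]
    by (simp add: Q_def pdt_eq_tproj_div_Z[OF x] inner_diff_right inner_commute)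
  ultimately show ?thesis by (simp add: inner_diff_right algebra_simps)
qed

lemma pdx_flux:
  assumes x: "x \<in> \<Omega>" and i: "i \<in> Basis"
  shows "pdx i (\<lambda>s y. \<Sum>k\<in>Basis. pdx k u s y \<bullet>
            pdx k (\<lambda>s y. (1 / sqrt (\<epsilon> ^ 2 + (\<Sum>k\<in>Basis. norm (pdx k u s y) ^ 2))) *\<^sub>R pdx i u s y) s y) t x
     = (\<Sum>k\<in>Basis. pdx k u t x \<bullet> Z_dxx t i k i x + pdx i (pdx k u) t x \<bullet> Z_dx t k i x)"
proof -
  have "has_dir_deriv_on \<Omega> i (\<lambda>y. \<Sum>k\<in>Basis. pdx k u t y \<bullet> Z_dx t k i y)
      (\<lambda>y. \<Sum>k\<in>Basis. pdx k u t y \<bullet> Z_dxx t i k i y + pdx i (pdx k u) t y \<bullet> Z_dx t k i y)"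
    by (intro has_dir_deriv_on_sum has_dir_deriv_on_inner has_dir_deriv_on_pdx has_dir_deriv_on_Z_dx
        t i) auto
  hence "has_dir_deriv_on \<Omega> i (\<lambda>y. \<Sum>k\<in>Basis. pdx k u t y \<bullet>
        pdx k (\<lambda>s y. (1 / sqrt (\<epsilon> ^ 2 + (\<Sum>k\<in>Basis. norm (pdx k u s y) ^ 2))) *\<^sub>R pdx i u s y) t y)
      (\<lambda>y. \<Sum>k\<in>Basis. pdx k u t y \<bullet> Z_dxx t i k i y + pdx i (pdx k u) t y \<bullet> Z_dx t k i y)"
    by (rule has_dir_deriv_on_cong[OF open_domain]) (simp add: pdx_Z_explicit[OF t] i)
  thus ?thesis by (rule pdx_eqI[OF _ x])
qed

lemma half_pdt_grad_sq:
  assumes x: "x \<in> \<Omega>"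
  shows "(1/2) * pdt (\<lambda>s y. \<Sum>k\<in>Basis. norm (pdx k u s y) ^ 2) t x
    = (\<Sum>k\<in>Basis. pdx k u t x \<bullet> (\<Sum>i\<in>Basis. Z_dxx t i k i x)
        + (pdx k (pdx k u) t x - tproj M (u t x) (pdx k (pdx k u) t x))
          \<bullet> (div_Z t x - tproj M (u t x) (div_Z t x)))"
proof -
  have "(\<Sum>i\<in>Basis. Z_dxx t k i i x) = (\<Sum>i\<in>Basis. Z_dxx t i k i x)" if "k \<in> Basis" for k
    using Z_dxx_commute[OF t that _ x] by (intro sum.cong) auto
  thus ?thesis
    unfolding pdt_grad_sq[OF x] sum_distrib_left using pdx_inner_pdx_pdt[OF _ x]
    by (intro sum.cong) simp_all
qed

lemma riem_pdx_Z:
  assumes x: "x \<in> \<Omega>" and i: "i \<in> Basis" and j: "j \<in> Basis"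
  shows "riem M (u t x) (pdx i u t x) (pdx j u t x) (pdx j u t x) (Z t i x)
    = (pdx j (pdx j u) t x - tproj M (u t x) (pdx j (pdx j u) t x))
        \<bullet> (Z_dx t i i x - tproj M (u t x) (Z_dx t i i x))
      - (pdx i (pdx j u) t x - tproj M (u t x) (pdx i (pdx j u) t x))
        \<bullet> (Z_dx t j i x - tproj M (u t x) (Z_dx t j i x))"
proof -
  have "sff M (u t x) (pdx e u t x) (pdx k u t x) = pdx e (pdx k u) t x - tproj M (u t x) (pdx e (pdx k u) t x)"
    if "e \<in> Basis" "k \<in> Basis" for e k
    using that by (intro sff_pdx[OF _ x] pdx_in_tangent_space has_dir_deriv_on_pdx t)
  moreover have "sff M (u t x) (pdx e u t x) (Z t k x) = Z_dx t e k x - tproj M (u t x) (Z_dx t e k x)"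
    if "e \<in> Basis" "k \<in> Basis" for e k
    using that by (intro sff_pdx[OF _ x] Z_in_tangent_space has_dir_deriv_on_Z t)
  ultimately show ?thesis using i j by (simp add: riem_def)
qed

end

lemma energy_identity:
  assumes t: "t \<in> {0<..<T}" and x: "x \<in> \<Omega>"
  shows "let Z = (\<lambda>i s y. (1 / sqrt (\<epsilon> ^ 2 + (\<Sum>k\<in>Basis. norm (pdx k u s y) ^ 2))) *\<^sub>R pdx i u s y)
      in (1/2) * pdt (\<lambda>s y. \<Sum>k\<in>Basis. norm (pdx k u s y) ^ 2) t x =
           (\<Sum>i\<in>Basis. pdx i (\<lambda>s y. \<Sum>k\<in>Basis. pdx k u s y \<bullet> pdx k (Z i) s y) t x)
         - (\<Sum>i\<in>Basis. \<Sum>j\<in>Basis. tproj M (u t x) (pdx j (pdx i u) t x) \<bullet> pdx j (Z i) t x)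
         + (\<Sum>i\<in>Basis. \<Sum>j\<in>Basis.
              riem M (u t x) (pdx i u t x) (pdx j u t x) (pdx j u t x) (Z i t x))"
proof -
  define N where "N v = v - tproj M (u t x) v" for v
  define A where "A k = pdx k u t x" for k
  define B where "B i j = pdx i (pdx j u) t x" for i j
  define C where "C j i = Z_dx t j i x" for j i
  define H where "H i k = Z_dxx t i k i x" for i k
  have p: "u t x \<in> M" by (rule u_in_M[OF t x])
  have lhs: "(1/2) * pdt (\<lambda>s y. \<Sum>k\<in>Basis. norm (pdx k u s y) ^ 2) t x
      = (\<Sum>k\<in>Basis. A k \<bullet> (\<Sum>i\<in>Basis. H i k) + N (B k k) \<bullet> N (div_Z t x))"
    unfolding half_pdt_grad_sq[OF t x] A_def B_def H_def N_def ..
  have N_div: "N (div_Z t x) = (\<Sum>i\<in>Basis. N (C i i))"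
    unfolding N_def div_Z_def C_def by (simp add: linear_sum[OF linear_tproj[OF p]] sum_subtractf)
  have normal_parts: "B i j \<bullet> C j i - tproj M (u t x) (B j i) \<bullet> C j i = N (B i j) \<bullet> N (C j i)"
    if "i \<in> Basis" "j \<in> Basis" for i j
    using inner_diff_tproj[OF p] pdx_pdx_commute[OF t that x] by (simp add: B_def N_def)
  have "(\<Sum>i\<in>Basis. \<Sum>k\<in>Basis. A k \<bullet> H i k + B i k \<bullet> C k i)
      - (\<Sum>i\<in>Basis. \<Sum>j\<in>Basis. tproj M (u t x) (B j i) \<bullet> C j i)
      + (\<Sum>i\<in>Basis. \<Sum>j\<in>Basis. N (B j j) \<bullet> N (C i i) - N (B i j) \<bullet> N (C j i))
    = (\<Sum>i\<in>Basis. \<Sum>j\<in>Basis. A j \<bullet> H i j + N (B j j) \<bullet> N (C i i))"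
    using normal_parts by (simp add: sum_subtractf sum.distrib[symmetric] algebra_simps)
  also have "\<dots> = (\<Sum>k\<in>Basis. A k \<bullet> (\<Sum>i\<in>Basis. H i k) + N (B k k) \<bullet> N (div_Z t x))"
    unfolding N_div sum.distrib inner_sum_right by (subst (1 2) sum.swap) simp
  finally have identity: "\<dots> = (\<Sum>i\<in>Basis. \<Sum>k\<in>Basis. A k \<bullet> H i k + B i k \<bullet> C k i)
      - (\<Sum>i\<in>Basis. \<Sum>j\<in>Basis. tproj M (u t x) (B j i) \<bullet> C j i)
      + (\<Sum>i\<in>Basis. \<Sum>j\<in>Basis. N (B j j) \<bullet> N (C i i) - N (B i j) \<bullet> N (C j i))" ..
  let ?Z = "\<lambda>i s y. (1 / sqrt (\<epsilon> ^ 2 + (\<Sum>k\<in>Basis. norm (pdx k u s y) ^ 2))) *\<^sub>R pdx i u s y"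
  have "(\<Sum>i\<in>Basis. pdx i (\<lambda>s y. \<Sum>k\<in>Basis. pdx k u s y \<bullet> pdx k (?Z i) s y) t x)
      = (\<Sum>i\<in>Basis. \<Sum>k\<in>Basis. A k \<bullet> H i k + B i k \<bullet> C k i)"
    by (intro sum.cong refl) (simp add: pdx_flux[OF t x] A_def B_def C_def H_def)
  moreover have "(\<Sum>i\<in>Basis. \<Sum>j\<in>Basis. tproj M (u t x) (pdx j (pdx i u) t x) \<bullet> pdx j (?Z i) t x)
      = (\<Sum>i\<in>Basis. \<Sum>j\<in>Basis. tproj M (u t x) (B j i) \<bullet> C j i)"
    by (intro sum.cong refl) (simp add: pdx_Z_explicit[OF t x] B_def C_def)
  moreover have "(\<Sum>i\<in>Basis. \<Sum>j\<in>Basis. riem M (u t x) (A i) (A j) (A j) (?Z i t x))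
      = (\<Sum>i\<in>Basis. \<Sum>j\<in>Basis. N (B j j) \<bullet> N (C i i) - N (B i j) \<bullet> N (C j i))"
    by (intro sum.cong refl) (simp add: Z_explicit riem_pdx_Z[OF t x] A_def B_def C_def N_def)
  ultimately show ?thesis unfolding Let_def lhs identity by (simp only: A_def)
qed

end

theorem lemma3p2:
  fixes M :: "'n::euclidean_space set"
    and \<Omega> :: "'m::euclidean_space set"
    and u :: "real \<Rightarrow> 'm \<Rightarrow> 'n"
    and n :: nat and a \<epsilon> T :: real
  assumes manifold: "smooth_submanifold M n"
    and complete: "intrinsically_complete M"
    and conn: "connected M"
    and dom: "smooth_domain \<Omega>"
    and alpha: "0 < a" "a < 1"
    and eps: "\<epsilon> > 0"
    and Tpos: "T > 0"
    and reg: "parabolic_holder_3a_loc a \<Omega> T u"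
    and vals: "\<forall>t\<in>{0..<T}. \<forall>x\<in>closure \<Omega>. u t x \<in> M"
    and eqn: "\<forall>t\<in>{0<..<T}. \<forall>x\<in>\<Omega>.
       pdt u t x = tproj M (u t x)
         (\<Sum>i\<in>Basis. pdx i (\<lambda>s y. (1 / sqrt (\<epsilon> ^ 2 + (\<Sum>k\<in>Basis. norm (pdx k u s y) ^ 2))) *\<^sub>R pdx i u s y) t x)"
  shows "\<forall>t\<in>{0<..<T}. \<forall>x\<in>\<Omega>.
     (let Z = (\<lambda>i s y. (1 / sqrt (\<epsilon> ^ 2 + (\<Sum>k\<in>Basis. norm (pdx k u s y) ^ 2))) *\<^sub>R pdx i u s y)
      in (1/2) * pdt (\<lambda>s y. \<Sum>k\<in>Basis. norm (pdx k u s y) ^ 2) t x =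
           (\<Sum>i\<in>Basis. pdx i (\<lambda>s y. \<Sum>k\<in>Basis. pdx k u s y \<bullet> pdx k (Z i) s y) t x)
         - (\<Sum>i\<in>Basis. \<Sum>j\<in>Basis. tproj M (u t x) (pdx j (pdx i u) t x) \<bullet> pdx j (Z i) t x)
         + (\<Sum>i\<in>Basis. \<Sum>j\<in>Basis.
              riem M (u t x) (pdx i u t x) (pdx j u t x) (pdx j u t x) (Z i t x)))"
proof -
  have "open \<Omega>" using dom unfolding smooth_domain_def by blast
  then interpret regularized_flow M n \<Omega> u a T \<epsilon>
    using manifold eps reg vals eqn by unfold_locales
  show ?thesis using energy_identity by blast
qed

end
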